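(* Every positive harmonic function $u$ on $\mathbb D$ is a Bekollé–Bonami $B_p$ weight for every $p>2$, i.e. $$\sup_Q\Big(\frac1{A(Q)}\int_Q u\,dA\Big)\Big(\frac1{A(Q)}\int_Q u^{-1/(p-1)}dA\Big)^{p-1}<\infty,$$ the supremum over all Carleson boxes $Q\subset\mathbb D$.
   Context: $dA$ is normalized area measure on $\mathbb D$; $m$ normalized Lebesgue measure on $\partial\mathbb D$, $|I|=m(I)$; a Carleson box is $Q(I)=\{z\in\mathbb D:1-|z|\le|I|,\ z/|z|\in I\}$ for an arc $I\subset\partial\mathbb D$. *)

theory Defs
  imports "HOL-Analysis.Analysis"
begin

definition pdx :: "(complex \<Rightarrow> real) \<Rightarrow> complex \<Rightarrow> real" where
  "pdx f z = deriv (\<lambda>t::real. f (z + complex_of_real t)) 0"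

definition pdy :: "(complex \<Rightarrow> real) \<Rightarrow> complex \<Rightarrow> real" where
  "pdy f z = deriv (\<lambda>t::real. f (z + \<i> * complex_of_real t)) 0"

definition harmonic_on :: "complex set \<Rightarrow> (complex \<Rightarrow> real) \<Rightarrow> bool" where
  "harmonic_on S u \<longleftrightarrow> open S \<and>
     (\<forall>z\<in>S. u differentiable (at z) \<and> pdx u differentiable (at z) \<and> pdy u differentiable (at z)) \<and>
     continuous_on S (pdx (pdx u)) \<and> continuous_on S (pdx (pdy u)) \<and>
     continuous_on S (pdy (pdx u)) \<and> continuous_on S (pdy (pdy u)) \<and>
     (\<forall>z\<in>S. pdx (pdx u) z + pdy (pdy u) z = 0)"

text \<open>Closed arc of the unit circle starting at angle a with angular length l (0 < l \<le> 2 pi);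
  its normalized length is l / (2 pi).\<close>
definition circ_arc :: "real \<Rightarrow> real \<Rightarrow> complex set" where
  "circ_arc a l = {cis t | t. a \<le> t \<and> t \<le> a + l}"

definition carleson_box :: "real \<Rightarrow> real \<Rightarrow> complex set" where
  "carleson_box a l = {z. norm z < 1 \<and> 1 - norm z \<le> l / (2 * pi) \<and> z / complex_of_real (norm z) \<in> circ_arc a l}"

definition is_carleson_box :: "complex set \<Rightarrow> bool" where
  "is_carleson_box Q \<longleftrightarrow> (\<exists>a l. 0 < l \<and> l \<le> 2 * pi \<and> Q = carleson_box a l)"

text \<open>Normalized area measure dA = dx dy / pi.\<close>
definition areaA :: "complex set \<Rightarrow> real" where
  "areaA Q = measure lborel Q / pi"

definition avgA :: "complex set \<Rightarrow> (complex \<Rightarrow> real) \<Rightarrow> real" where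
  "avgA Q f = (1 / areaA Q) * ((LINT z:Q|lborel. f z) / pi)"

text \<open>Bekolle-Bonami B_p condition; finiteness of the supremum includes finiteness
  (integrability) of both integrals over every box.\<close>
definition bekolle_bonami :: "real \<Rightarrow> (complex \<Rightarrow> real) \<Rightarrow> bool" where
  "bekolle_bonami p u \<longleftrightarrow> (\<exists>C. \<forall>Q. is_carleson_box Q \<longrightarrow>
      set_integrable lborel Q u \<and>
      set_integrable lborel Q (\<lambda>z. u z powr (- 1 / (p - 1))) \<and>
      avgA Q u * (avgA Q (\<lambda>z. u z powr (- 1 / (p - 1)))) powr (p - 1) \<le> C)"

end

(*
  A positive harmonic u on the disc is Re F for a holomorphic F with Re F > 0. Fix a Carleson
  box Q = Q(I), put h = |I| and let a be the midpoint of its inner edge, so |a| = 1 - h.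
  Harnack's inequality (Schwarz-Pick applied to the Cayley transform of F) gives
  u(z) >= c u(a) (1 - |z|) / h on Q, and u(rho a) <= 3 u(a) for 1 - h <= rho < 1. Since the
  Poisson kernel of a is at least 1/(25 h) on I, the Poisson formula on the circle |z| = rho
  bounds the mean of u over the arc by u(rho a). Integrating in polar coordinates,
  int_Q u <~ h^2 u(a) and, for s = 1/(p - 1) < 1, int_Q u^(-s) <~ h^2 u(a)^(-s) because
  (1 - rho)^(-s) is integrable. As |Q| ~ h^2, the factors u(a) cancel in the B_p product.
*)
theory Submission
  imports Defs "HOL-Complex_Analysis.Complex_Analysis" "HOL-Library.Periodic_Fun"
begin

section \<open>Directional derivatives and harmonic functions\<close>

definition dderiv :: "('a::real_normed_vector \<Rightarrow> real) \<Rightarrow> 'a \<Rightarrow> 'a \<Rightarrow> real" where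
  "dderiv f v z = deriv (\<lambda>t. f (z + t *\<^sub>R v)) 0"

lemma has_real_derivative_along_line:
  assumes "(f has_derivative D) (at (p + t0 *\<^sub>R v))"
  shows "((\<lambda>t. f (p + t *\<^sub>R v)) has_real_derivative D v) (at t0)"
proof -
  have "((\<lambda>t. p + t *\<^sub>R v) has_derivative (\<lambda>t. t *\<^sub>R v)) (at t0)"
    by (auto intro!: derivative_eq_intros)
  from has_derivative_compose[OF this assms]
  have "((\<lambda>t. f (p + t *\<^sub>R v)) has_derivative (\<lambda>t. D (t *\<^sub>R v))) (at t0)"
    by (simp add: o_def)
  moreover have "D (t *\<^sub>R v) = D v * t" for t
    using assms has_derivative_linear linear_scale by fastforce
  ultimately show ?thesis
    unfolding has_field_derivative_def by simp
qed

lemma dderiv_eq_frechet: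
  assumes "(f has_derivative D) (at z)"
  shows "dderiv f v z = D v"
  unfolding dderiv_def
  by (rule DERIV_imp_deriv, rule has_real_derivative_along_line) (use assms in simp)

lemma has_real_derivative_dderiv:
  assumes "f differentiable (at (p + t0 *\<^sub>R v))"
  shows "((\<lambda>t. f (p + t *\<^sub>R v)) has_real_derivative dderiv f v (p + t0 *\<^sub>R v)) (at t0)"
proof -
  obtain D where "(f has_derivative D) (at (p + t0 *\<^sub>R v))"
    using assms by (auto simp: differentiable_def)
  then show ?thesis
    using has_real_derivative_along_line dderiv_eq_frechet by metis
qed

lemma pdx_eq_dderiv: "pdx f = dderiv f 1"
  by (simp add: fun_eq_iff pdx_def dderiv_def scaleR_conv_of_real)

lemma pdy_eq_dderiv: "pdy f = dderiv f \<i>"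
  by (simp add: fun_eq_iff pdy_def dderiv_def scaleR_conv_of_real mult.commute)

lemma second_difference_mean_value:
  fixes u :: "'a::real_normed_vector \<Rightarrow> real"
  assumes s: "0 < s"
    and square: "\<And>a b. 0 \<le> a \<Longrightarrow> a \<le> s \<Longrightarrow> 0 \<le> b \<Longrightarrow> b \<le> s \<Longrightarrow> z + a *\<^sub>R v + b *\<^sub>R w \<in> S"
    and du: "\<And>y. y \<in> S \<Longrightarrow> u differentiable (at y)"
    and dv: "\<And>y. y \<in> S \<Longrightarrow> dderiv u v differentiable (at y)"
  obtains \<sigma> \<tau> where "0 < \<sigma>" "\<sigma> < s" "0 < \<tau>" "\<tau> < s"
    "u (z + s *\<^sub>R v + s *\<^sub>R w) - u (z + s *\<^sub>R v) - u (z + s *\<^sub>R w) + u z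
       = s * s * dderiv (dderiv u v) w (z + \<sigma> *\<^sub>R v + \<tau> *\<^sub>R w)"
proof -
  have comm: "z + s *\<^sub>R w + t *\<^sub>R v = z + t *\<^sub>R v + s *\<^sub>R w" for t
    by (simp add: algebra_simps)
  have "\<exists>\<sigma>. 0 < \<sigma> \<and> \<sigma> < s \<and>
      (u (z + s *\<^sub>R w + s *\<^sub>R v) - u (z + s *\<^sub>R v)) - (u (z + s *\<^sub>R w + 0 *\<^sub>R v) - u (z + 0 *\<^sub>R v))
        = (s - 0) * (dderiv u v (z + s *\<^sub>R w + \<sigma> *\<^sub>R v) - dderiv u v (z + \<sigma> *\<^sub>R v))"
  proof (rule MVT2[OF s])
    fix t assume t: "0 \<le> t" "t \<le> s"
    have "z + t *\<^sub>R v \<in> S" "z + s *\<^sub>R w + t *\<^sub>R v \<in> S"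
      using square[OF t, of 0] square[OF t, of s] s by (simp_all add: comm)
    then show "((\<lambda>t. u (z + s *\<^sub>R w + t *\<^sub>R v) - u (z + t *\<^sub>R v)) has_real_derivative
        dderiv u v (z + s *\<^sub>R w + t *\<^sub>R v) - dderiv u v (z + t *\<^sub>R v)) (at t)"
      by (intro DERIV_diff has_real_derivative_dderiv du)
  qed
  then obtain \<sigma> where \<sigma>: "0 < \<sigma>" "\<sigma> < s" and first:
    "u (z + s *\<^sub>R v + s *\<^sub>R w) - u (z + s *\<^sub>R v) - u (z + s *\<^sub>R w) + u z
       = s * (dderiv u v (z + \<sigma> *\<^sub>R v + s *\<^sub>R w) - dderiv u v (z + \<sigma> *\<^sub>R v + 0 *\<^sub>R w))"
    by (auto simp: comm algebra_simps)
  have "\<exists>\<tau>. 0 < \<tau> \<and> \<tau> < s \<and>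
      dderiv u v (z + \<sigma> *\<^sub>R v + s *\<^sub>R w) - dderiv u v (z + \<sigma> *\<^sub>R v + 0 *\<^sub>R w)
        = (s - 0) * dderiv (dderiv u v) w (z + \<sigma> *\<^sub>R v + \<tau> *\<^sub>R w)"
  proof (rule MVT2[OF s])
    fix t assume "0 \<le> t" "t \<le> s"
    then show "((\<lambda>t. dderiv u v (z + \<sigma> *\<^sub>R v + t *\<^sub>R w)) has_real_derivative
        dderiv (dderiv u v) w (z + \<sigma> *\<^sub>R v + t *\<^sub>R w)) (at t)"
      using \<sigma> by (intro has_real_derivative_dderiv dv square) auto
  qed
  then show ?thesis
    using that \<sigma> first by auto
qed

lemma dist_parallelogram_lt:
  assumes "0 < e" "0 \<le> a" "a \<le> e / (2 * (norm v + norm w + 1))" "0 \<le> b" "b \<le> e / (2 * (norm v + norm w + 1))"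
  shows "dist (z + a *\<^sub>R v + b *\<^sub>R w) z < e"
proof -
  define s where "s = e / (2 * (norm v + norm w + 1))"
  have "norm v + norm w + 1 > 0"
    by (simp add: add_nonneg_pos)
  then have "0 < s"
    unfolding s_def using assms by simp
  have "dist (z + a *\<^sub>R v + b *\<^sub>R w) z \<le> a * norm v + b * norm w"
    using assms norm_triangle_ineq[of "a *\<^sub>R v" "b *\<^sub>R w"] by (simp add: dist_norm add.assoc)
  also have "\<dots> \<le> s * norm v + s * norm w"
    using assms unfolding s_def by (intro add_mono mult_right_mono) auto
  also have "\<dots> < s * (norm v + norm w + 1)"
    using \<open>0 < s\<close> by (simp add: algebra_simps)
  also have "\<dots> = e / 2"
    using \<open>norm v + norm w + 1 > 0\<close> unfolding s_def by (simp add: field_simps)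
  also have "\<dots> < e"
    using assms by simp
  finally show ?thesis .
qed

text \<open>The second difference \<open>u(z + s v + s w) - u(z + s v) - u(z + s w) + u z\<close> is symmetric in
  \<open>v\<close> and \<open>w\<close>; evaluating it by the mean value theorem in both orders equates the two mixed
  derivatives at nearby points.\<close>

lemma mixed_dderivs_agree_nearby:
  fixes u :: "'a::real_normed_vector \<Rightarrow> real"
  assumes e: "0 < e" "ball z e \<subseteq> S"
    and du: "\<And>y. y \<in> S \<Longrightarrow> u differentiable (at y)"
    and dv: "\<And>y. y \<in> S \<Longrightarrow> dderiv u v differentiable (at y)"
    and dw: "\<And>y. y \<in> S \<Longrightarrow> dderiv u w differentiable (at y)"
  obtains p1 p2 where "dist p1 z < e" "dist p2 z < e"
    "dderiv (dderiv u v) w p1 = dderiv (dderiv u w) v p2"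
proof -
  define s where "s = e / (2 * (norm v + norm w + 1))"
  have s: "0 < s" unfolding s_def using e by (simp add: add_nonneg_pos)
  have small: "dist (z + a *\<^sub>R v + b *\<^sub>R w) z < e"
    if "0 \<le> a" "a \<le> s" "0 \<le> b" "b \<le> s" for a b
    using dist_parallelogram_lt[OF e(1) that[unfolded s_def]] .
  have inS: "z + a *\<^sub>R v + b *\<^sub>R w \<in> S" "z + a *\<^sub>R w + b *\<^sub>R v \<in> S"
    if "0 \<le> a" "a \<le> s" "0 \<le> b" "b \<le> s" for a b
  proof -
    have swap: "z + a *\<^sub>R w + b *\<^sub>R v = z + b *\<^sub>R v + a *\<^sub>R w"
      by (simp add: algebra_simps)
    show "z + a *\<^sub>R v + b *\<^sub>R w \<in> S" "z + a *\<^sub>R w + b *\<^sub>R v \<in> S"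
      unfolding swap using small[OF that] small[OF that(3,4,1,2)] e(2) by (auto simp: dist_commute)
  qed
  obtain \<sigma> \<tau> where \<sigma>\<tau>: "0 < \<sigma>" "\<sigma> < s" "0 < \<tau>" "\<tau> < s" and vw:
    "u (z + s *\<^sub>R v + s *\<^sub>R w) - u (z + s *\<^sub>R v) - u (z + s *\<^sub>R w) + u z
       = s * s * dderiv (dderiv u v) w (z + \<sigma> *\<^sub>R v + \<tau> *\<^sub>R w)"
    using second_difference_mean_value[OF s inS(1) du dv] by blast
  obtain \<sigma>' \<tau>' where \<sigma>\<tau>': "0 < \<sigma>'" "\<sigma>' < s" "0 < \<tau>'" "\<tau>' < s" and wv:
    "u (z + s *\<^sub>R w + s *\<^sub>R v) - u (z + s *\<^sub>R w) - u (z + s *\<^sub>R v) + u z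
       = s * s * dderiv (dderiv u w) v (z + \<sigma>' *\<^sub>R w + \<tau>' *\<^sub>R v)"
    using second_difference_mean_value[OF s inS(2) du dw] by blast
  have "dderiv (dderiv u v) w (z + \<sigma> *\<^sub>R v + \<tau> *\<^sub>R w) = dderiv (dderiv u w) v (z + \<sigma>' *\<^sub>R w + \<tau>' *\<^sub>R v)"
    using vw wv s by (simp add: algebra_simps)
  moreover have "dist (z + \<sigma> *\<^sub>R v + \<tau> *\<^sub>R w) z < e" "dist (z + \<sigma>' *\<^sub>R w + \<tau>' *\<^sub>R v) z < e"
  proof -
    have swap: "z + \<sigma>' *\<^sub>R w + \<tau>' *\<^sub>R v = z + \<tau>' *\<^sub>R v + \<sigma>' *\<^sub>R w"
      by (simp add: algebra_simps)
    show "dist (z + \<sigma> *\<^sub>R v + \<tau> *\<^sub>R w) z < e" "dist (z + \<sigma>' *\<^sub>R w + \<tau>' *\<^sub>R v) z < e"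
      unfolding swap using small[of \<sigma> \<tau>] small[of \<tau>' \<sigma>'] \<sigma>\<tau> \<sigma>\<tau>' by simp_all
  qed
  ultimately show ?thesis
    using that by blast
qed

lemma dderiv_commute:
  fixes u :: "'a::real_normed_vector \<Rightarrow> real"
  assumes S: "open S" "z \<in> S"
    and du: "\<And>y. y \<in> S \<Longrightarrow> u differentiable (at y)"
    and dv: "\<And>y. y \<in> S \<Longrightarrow> dderiv u v differentiable (at y)"
    and dw: "\<And>y. y \<in> S \<Longrightarrow> dderiv u w differentiable (at y)"
    and cvw: "continuous_on S (dderiv (dderiv u v) w)"
    and cwv: "continuous_on S (dderiv (dderiv u w) v)"
  shows "dderiv (dderiv u v) w z = dderiv (dderiv u w) v z"
proof -
  define D1 where "D1 = dderiv (dderiv u v) w"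
  define D2 where "D2 = dderiv (dderiv u w) v"
  have "\<bar>D1 z - D2 z\<bar> \<le> \<epsilon>" if "\<epsilon> > 0" for \<epsilon>
  proof -
    have "isCont D1 z" "isCont D2 z"
      using cvw cwv S continuous_on_eq_continuous_at unfolding D1_def D2_def by blast+
    moreover have "\<epsilon> / 2 > 0" using that by simp
    ultimately obtain d1 d2 where d: "d1 > 0" "d2 > 0"
      and c1: "\<And>y. dist y z < d1 \<Longrightarrow> dist (D1 y) (D1 z) < \<epsilon> / 2"
      and c2: "\<And>y. dist y z < d2 \<Longrightarrow> dist (D2 y) (D2 z) < \<epsilon> / 2"
      unfolding continuous_at_eps_delta by metis
    obtain e0 where e0: "e0 > 0" "ball z e0 \<subseteq> S"
      using S open_contains_ball by blast
    define e where "e = min e0 (min d1 d2)"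
    have "0 < e" "ball z e \<subseteq> S"
      using d e0 unfolding e_def by auto
    then obtain p1 p2 where "dist p1 z < e" "dist p2 z < e" "D1 p1 = D2 p2"
      unfolding D1_def D2_def using mixed_dderivs_agree_nearby[OF _ _ du dv dw] by blast
    moreover have "dist (D1 p1) (D1 z) < \<epsilon> / 2" "dist (D2 p2) (D2 z) < \<epsilon> / 2"
      using c1 c2 \<open>dist p1 z < e\<close> \<open>dist p2 z < e\<close> unfolding e_def by auto
    moreover have "dist (D1 z) (D2 z) \<le> dist (D1 p1) (D1 z) + dist (D2 p2) (D2 z)"
      using dist_triangle[of "D1 z" "D2 z" "D1 p1"] \<open>D1 p1 = D2 p2\<close> by (simp add: dist_commute)
    ultimately show ?thesis by (simp add: dist_real_def)
  qed
  from this[of "\<bar>D1 z - D2 z\<bar> / 2"] have "D1 z = D2 z"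
    by fastforce
  then show ?thesis
    unfolding D1_def D2_def .
qed

lemma linear_complex_to_real:
  fixes D :: "complex \<Rightarrow> real"
  assumes "linear D"
  shows "D h = Re h * D 1 + Im h * D \<i>"
proof -
  have "h = Re h *\<^sub>R 1 + Im h *\<^sub>R \<i>"
    by (simp add: complex_eq_iff)
  then have "D h = D (Re h *\<^sub>R 1 + Im h *\<^sub>R \<i>)"
    by simp
  also have "\<dots> = Re h * D 1 + Im h * D \<i>"
    using assms by (simp add: linear_add linear_scale)
  finally show ?thesis .
qed

lemma pdx_pdy_frechet:
  assumes "(f has_derivative D) (at z)"
  shows "pdx f z = D 1" "pdy f z = D \<i>"
  using dderiv_eq_frechet[OF assms] by (simp_all add: pdx_eq_dderiv pdy_eq_dderiv)

text \<open>By Clairaut's theorem and the Laplace equation, \<open>u\<^sub>x - i u\<^sub>y\<close> satisfies the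
  Cauchy--Riemann equations.\<close>

lemma harmonic_on_holomorphic_gradient:
  assumes "harmonic_on S u"
  shows "(\<lambda>z. complex_of_real (pdx u z) - \<i> * complex_of_real (pdy u z)) holomorphic_on S"
proof -
  have S: "open S"
    and du: "\<And>w. w \<in> S \<Longrightarrow> u differentiable (at w)"
    and dx: "\<And>w. w \<in> S \<Longrightarrow> pdx u differentiable (at w)"
    and dy: "\<And>w. w \<in> S \<Longrightarrow> pdy u differentiable (at w)"
    and cxy: "continuous_on S (pdy (pdx u))" and cyx: "continuous_on S (pdx (pdy u))"
    and laplace: "\<And>w. w \<in> S \<Longrightarrow> pdx (pdx u) w + pdy (pdy u) w = 0"
    using assms unfolding harmonic_on_def by auto
  have "(\<lambda>z. complex_of_real (pdx u z) - \<i> * complex_of_real (pdy u z)) field_differentiable at w"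
    if w: "w \<in> S" for w
  proof -
    obtain Dx Dy where Dx: "(pdx u has_derivative Dx) (at w)" and Dy: "(pdy u has_derivative Dy) (at w)"
      using dx[OF w] dy[OF w] by (auto simp: differentiable_def)
    have "pdy (pdx u) w = pdx (pdy u) w"
      using dderiv_commute[OF S w du, of 1 \<i>] dx dy cxy cyx by (simp add: pdx_eq_dderiv pdy_eq_dderiv)
    then have cr1: "Dx \<i> = Dy 1"
      using pdx_pdy_frechet[OF Dx] pdx_pdy_frechet[OF Dy] by simp
    have cr2: "Dy \<i> = - Dx 1"
      using laplace[OF w] pdx_pdy_frechet[OF Dx] pdx_pdy_frechet[OF Dy] by simp
    define c where "c = complex_of_real (Dx 1) - \<i> * complex_of_real (Dy 1)"
    have "(\<lambda>h. complex_of_real (Dx h) - \<i> * complex_of_real (Dy h)) = (*) c"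
    proof
      fix h
      show "complex_of_real (Dx h) - \<i> * complex_of_real (Dy h) = c * h"
        using linear_complex_to_real[OF has_derivative_linear[OF Dx], of h]
          linear_complex_to_real[OF has_derivative_linear[OF Dy], of h] cr1 cr2
        unfolding c_def by (simp add: complex_eq_iff algebra_simps)
    qed
    moreover have "((\<lambda>z. complex_of_real (pdx u z) - \<i> * complex_of_real (pdy u z)) has_derivative
        (\<lambda>h. complex_of_real (Dx h) - \<i> * complex_of_real (Dy h))) (at w)"
      by (intro has_derivative_diff has_derivative_mult_right
          bounded_linear.has_derivative[OF bounded_linear_of_real] Dx Dy)
    ultimately show ?thesis
      unfolding field_differentiable_def has_field_derivative_def by metis
  qed
  then show ?thesis
    by (simp add: holomorphic_on_def field_differentiable_at_within)
qed

lemma harmonic_on_convex_Re_holomorphic: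
  assumes harm: "harmonic_on S u" and "convex S"
  obtains F where "F holomorphic_on S" "\<And>z. z \<in> S \<Longrightarrow> Re (F z) = u z"
proof -
  define g where "g z = complex_of_real (pdx u z) - \<i> * complex_of_real (pdy u z)" for z
  have S: "open S" and du: "\<And>w. w \<in> S \<Longrightarrow> u differentiable (at w)"
    using harm unfolding harmonic_on_def by auto
  obtain G where G_within: "\<And>x. x \<in> S \<Longrightarrow> (G has_field_derivative g x) (at x within S)"
    using holomorphic_convex_primitive'[OF \<open>convex S\<close> S harmonic_on_holomorphic_gradient[OF harm]]
    unfolding g_def by blast
  have G: "(G has_field_derivative g x) (at x)" if "x \<in> S" for x
    using G_within[OF that] at_within_open[OF that S] by simp
  have "\<exists>c. \<forall>x\<in>S. Re (G x) - u x = c"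
  proof (rule has_derivative_zero_constant[OF \<open>convex S\<close>])
    fix x assume x: "x \<in> S"
    obtain Du where Du: "(u has_derivative Du) (at x)"
      using du[OF x] by (auto simp: differentiable_def)
    have "((\<lambda>x. Re (G x) - u x) has_derivative (\<lambda>h. Re (g x * h) - Du h)) (at x)"
      using G[OF x] Du unfolding has_field_derivative_def
      by (intro has_derivative_diff has_derivative_Re) auto
    moreover have "Re (g x * h) - Du h = 0" for h
      using linear_complex_to_real[OF has_derivative_linear[OF Du], of h] pdx_pdy_frechet[OF Du]
      by (simp add: g_def algebra_simps)
    ultimately show "((\<lambda>x. Re (G x) - u x) has_derivative (\<lambda>h. 0)) (at x within S)"
      by (auto intro: has_derivative_at_withinI)
  qed
  then obtain c where c: "\<And>x. x \<in> S \<Longrightarrow> Re (G x) - u x = c"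
    by blast
  have "G holomorphic_on S"
    using G S by (auto simp: holomorphic_on_open field_differentiable_def)
  then have "(\<lambda>z. G z - of_real c) holomorphic_on S"
    by (intro holomorphic_intros)
  moreover have "\<And>z. z \<in> S \<Longrightarrow> Re (G z - of_real c) = u z"
    using c by force
  ultimately show ?thesis
    using that by blast
qed

section \<open>Polar coordinates\<close>

lemma borel_measurable_Complex [measurable]:
  assumes [measurable]: "f \<in> borel_measurable M" "g \<in> borel_measurable M"
  shows "(\<lambda>x. Complex (f x) (g x)) \<in> borel_measurable M"
  unfolding Complex_eq by measurable

lemma borel_measurable_tan [measurable]: "(tan :: real \<Rightarrow> real) \<in> borel_measurable borel"
  unfolding tan_def by measurable

lemma borel_measurable_cis [measurable]: "cis \<in> borel_measurable borel"
  by (intro borel_measurable_continuous_onI continuous_intros)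

lemma lborel_complex_eq_distr_pair:
  "(lborel :: complex measure) = distr (lborel \<Otimes>\<^sub>M lborel) borel (\<lambda>(x, y). Complex x y)"
proof (rule lborel_eqI)
  fix l u :: complex
  assume le: "\<And>b. b \<in> Basis \<Longrightarrow> l \<bullet> b \<le> u \<bullet> b"
  have "Re l \<le> Re u" "Im l \<le> Im u"
    using le[of 1] le[of \<i>] by (auto simp: Basis_complex_def)
  moreover have "(\<lambda>(x, y). Complex x y) -` box l u \<inter> space (lborel \<Otimes>\<^sub>M lborel)
      = {Re l<..<Re u} \<times> {Im l<..<Im u}"
    by (auto simp: box_def Basis_complex_def space_pair_measure)
  ultimately show "emeasure (distr (lborel \<Otimes>\<^sub>M lborel) borel (\<lambda>(x, y). Complex x y)) (box l u)
      = (\<Prod>b\<in>Basis. (u - l) \<bullet> b)"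
    by (simp add: emeasure_distr case_prod_unfold lborel.emeasure_pair_measure_Times
        Basis_complex_def ennreal_mult)
qed simp

lemma nn_integral_complex_iterated:
  fixes f :: "complex \<Rightarrow> ennreal"
  assumes [measurable]: "f \<in> borel_measurable borel"
  shows "(\<integral>\<^sup>+z. f z \<partial>lborel) = (\<integral>\<^sup>+x. \<integral>\<^sup>+y. f (Complex x y) \<partial>lborel \<partial>lborel)"
proof -
  have "(\<integral>\<^sup>+z. f z \<partial>lborel) = (\<integral>\<^sup>+p. f (Complex (fst p) (snd p)) \<partial>(lborel \<Otimes>\<^sub>M lborel))"
    by (subst lborel_complex_eq_distr_pair, subst nn_integral_distr) (auto simp: case_prod_unfold)
  also have "\<dots> = (\<integral>\<^sup>+x. \<integral>\<^sup>+y. f (Complex x y) \<partial>lborel \<partial>lborel)"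
    by (subst lborel.nn_integral_fst[symmetric]) auto
  finally show ?thesis .
qed

lemma nn_integral_lborel_shift:
  fixes f :: "real \<Rightarrow> ennreal"
  assumes "f \<in> borel_measurable borel"
  shows "(\<integral>\<^sup>+x. f x \<partial>lborel) = (\<integral>\<^sup>+x. f (t + x) \<partial>lborel)"
  using nn_integral_real_affine[OF assms, of 1 t] by simp

lemma nn_integral_Icc_rescale:
  fixes g :: "real \<Rightarrow> real"
  assumes [measurable]: "g \<in> borel_measurable borel" and "c > 0"
  shows "(\<integral>\<^sup>+\<theta>. ennreal (g \<theta>) * indicator {0..c} \<theta> \<partial>lborel)
    = ennreal c * (\<integral>\<^sup>+t. ennreal (g (c*t)) * indicator {0..1} t \<partial>lborel)"
proof -
  have "indicator {0..c} (c*t) = (indicator {0..1} t :: ennreal)" for t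
  proof -
    have "0 \<le> c*t \<longleftrightarrow> 0 \<le> t" "c*t \<le> c \<longleftrightarrow> t \<le> 1"
      using mult_le_cancel_left_pos[of c 0 t] mult_le_cancel_left_pos[of c t 1] \<open>c > 0\<close> by simp_all
    then show ?thesis
      by (simp add: indicator_def)
  qed
  then show ?thesis
    using nn_integral_real_affine[of "\<lambda>\<theta>. ennreal (g \<theta>) * indicator {0..c} \<theta>" c 0] \<open>c > 0\<close>
    by simp
qed

lemma nn_integral_indicator_incseq:
  fixes f :: "'a \<Rightarrow> ennreal"
  assumes "incseq A" and [measurable]: "\<And>n. A n \<in> sets M" "f \<in> borel_measurable M"
  shows "(\<integral>\<^sup>+x. f x * indicator (\<Union>n. A n) x \<partial>M)
      = (SUP n. \<integral>\<^sup>+x. f x * indicator (A n) x \<partial>M)"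
proof -
  have "(SUP n. f x * indicator (A n) x) = f x * indicator (\<Union>n. A n) x" for x
  proof (cases "x \<in> (\<Union>n. A n)")
    case True
    then obtain m where "x \<in> A m" by auto
    then have "f x * indicator (\<Union>n. A n) x \<le> (SUP n. f x * indicator (A n) x)"
      using True by (intro SUP_upper2[of m]) auto
    then show ?thesis
      by (intro antisym SUP_least) (auto simp: indicator_def)
  qed (auto simp: indicator_def)
  moreover have "incseq (\<lambda>n x. f x * indicator (A n) x)"
    using \<open>incseq A\<close> by (auto simp: incseq_def le_fun_def indicator_def mono_def subset_iff)
  then have "(SUP n. \<integral>\<^sup>+x. f x * indicator (A n) x \<partial>M)
      = (\<integral>\<^sup>+x. (SUP n. f x * indicator (A n) x) \<partial>M)"
    by (subst nn_integral_monotone_convergence_SUP) auto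
  ultimately show ?thesis
    by simp
qed

lemma nn_integral_tan_substitution_Icc:
  fixes K :: "real \<Rightarrow> ennreal"
  assumes [measurable]: "K \<in> borel_measurable borel" and "-(pi/2) < a" "a < b" "b < pi/2"
  shows "(\<integral>\<^sup>+s. K s * ennreal (1 / (1 + s\<^sup>2)) * indicator {tan a..tan b} s \<partial>lborel) =
         (\<integral>\<^sup>+\<theta>. K (tan \<theta>) * indicator {a..b} \<theta> \<partial>lborel)"
proof -
  have cos_pos: "cos x > 0" if "x \<in> {a..b}" for x
    using that assms by (intro cos_gt_zero_pi) auto
  have "(\<integral>\<^sup>+s. K s * ennreal (1 / (1 + s\<^sup>2)) * indicator {tan a..tan b} s \<partial>lborel) =
      (\<integral>\<^sup>+x. K (tan x) * ennreal (1 / (1 + (tan x)\<^sup>2)) * ennreal (inverse ((cos x)\<^sup>2)) * indicator {a..b} x \<partial>lborel)"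
  proof (rule nn_integral_substitution_aux)
    show "continuous_on {a..b} (\<lambda>x. inverse ((cos x)\<^sup>2))"
      using cos_pos by (intro continuous_intros) (auto simp: less_le)
  qed (use \<open>a < b\<close> cos_pos in \<open>auto simp: less_le\<close>)
  also have "\<dots> = (\<integral>\<^sup>+x. K (tan x) * indicator {a..b} x \<partial>lborel)"
  proof (rule nn_integral_cong)
    fix x
    show "K (tan x) * ennreal (1 / (1 + (tan x)\<^sup>2)) * ennreal (inverse ((cos x)\<^sup>2)) * indicator {a..b} x
        = K (tan x) * indicator {a..b} x"
    proof (cases "x \<in> {a..b}")
      case True
      then have "cos x \<noteq> 0"
        using cos_pos by force
      moreover have "1 + (tan x)\<^sup>2 = (inverse (cos x))\<^sup>2"
        using tan_sec \<open>cos x \<noteq> 0\<close> by blast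
      ultimately have inv: "1 / (1 + (tan x)\<^sup>2) * inverse ((cos x)\<^sup>2) = 1"
        by (simp add: power_inverse)
      have "0 \<le> 1 / (1 + (tan x)\<^sup>2)"
        by (simp add: add_pos_nonneg less_imp_le)
      then have "ennreal (1 / (1 + (tan x)\<^sup>2)) * ennreal (inverse ((cos x)\<^sup>2)) = 1"
        by (simp only: ennreal_mult'[symmetric] inv ennreal_1)
      then show ?thesis
        by (simp add: mult.assoc)
    qed simp
  qed
  finally show ?thesis .
qed

lemma UN_arctan_intervals:
  "(\<Union>n. {arctan (- real (Suc n))..arctan (real (Suc n))}) = {-(pi/2)<..<pi/2}"
proof (intro equalityI subsetI)
  fix x assume "x \<in> (\<Union>n. {arctan (- real (Suc n))..arctan (real (Suc n))})"
  then obtain n where "arctan (- real (Suc n)) \<le> x" "x \<le> arctan (real (Suc n))"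
    by auto
  then show "x \<in> {-(pi/2)<..<pi/2}"
    using arctan_lbound[of "- real (Suc n)"] arctan_ubound[of "real (Suc n)"] by auto
next
  fix x assume x: "x \<in> {-(pi/2)<..<pi/2}"
  define n where "n = nat \<lceil>\<bar>tan x\<bar>\<rceil>"
  have "- real (Suc n) \<le> tan x" "tan x \<le> real (Suc n)"
    unfolding n_def by linarith+
  then have "arctan (- real (Suc n)) \<le> arctan (tan x)" "arctan (tan x) \<le> arctan (real (Suc n))"
    by (simp_all only: arctan_le_iff)
  then show "x \<in> (\<Union>n. {arctan (- real (Suc n))..arctan (real (Suc n))})"
    using x arctan_tan[of x] by auto
qed

lemma nn_integral_tan_substitution:
  fixes K :: "real \<Rightarrow> ennreal"
  assumes [measurable]: "K \<in> borel_measurable borel"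
  shows "(\<integral>\<^sup>+s. K s * ennreal (1 / (1 + s\<^sup>2)) \<partial>lborel) =
         (\<integral>\<^sup>+\<theta>. K (tan \<theta>) * indicator {-(pi/2)<..<pi/2} \<theta> \<partial>lborel)"
proof -
  define A where "A n = {- real (Suc n)..real (Suc n)}" for n
  define B where "B n = {arctan (- real (Suc n))..arctan (real (Suc n))}" for n
  have "(\<integral>\<^sup>+s. K s * ennreal (1 / (1 + s\<^sup>2)) * indicator (A n) s \<partial>lborel)
      = (\<integral>\<^sup>+\<theta>. K (tan \<theta>) * indicator (B n) \<theta> \<partial>lborel)" for n
    using nn_integral_tan_substitution_Icc[of K "arctan (- real (Suc n))" "arctan (real (Suc n))"]
      arctan_lbound arctan_ubound unfolding A_def B_def by (simp add: arctan_less_iff tan_arctan)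
  moreover have "(\<Union>n. A n) = UNIV"
  proof -
    have "x \<in> A (nat \<lceil>\<bar>x\<bar>\<rceil>)" for x
      unfolding A_def by auto linarith+
    then show ?thesis by blast
  qed
  moreover have "incseq A" "incseq B"
    unfolding A_def B_def by (auto simp: incseq_def arctan_le_iff intro: order_trans)
  moreover have "A n \<in> sets lborel" "B n \<in> sets lborel" for n
    unfolding A_def B_def by simp_all
  ultimately show ?thesis
    using nn_integral_indicator_incseq[of A lborel "\<lambda>s. K s * ennreal (1 / (1 + s\<^sup>2))"]
      nn_integral_indicator_incseq[of B lborel "\<lambda>\<theta>. K (tan \<theta>)"] UN_arctan_intervals
    unfolding B_def[symmetric] by simp
qed

lemma nn_integral_abs_mult_split:
  fixes g :: "real \<Rightarrow> ennreal"
  assumes [measurable]: "g \<in> borel_measurable borel"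
  shows "(\<integral>\<^sup>+\<rho>. ennreal \<bar>\<rho>\<bar> * g \<rho> \<partial>lborel) =
         (\<integral>\<^sup>+\<rho>. indicator {0<..} \<rho> * ennreal \<rho> * (g \<rho> + g (-\<rho>)) \<partial>lborel)"
proof -
  have "(\<integral>\<^sup>+\<rho>. ennreal \<bar>\<rho>\<bar> * g \<rho> \<partial>lborel) =
        (\<integral>\<^sup>+\<rho>. indicator {0<..} \<rho> * ennreal \<rho> * g \<rho> + indicator {..<0} \<rho> * ennreal (-\<rho>) * g \<rho> \<partial>lborel)"
    by (intro nn_integral_cong) (auto simp: indicator_def)
  also have "\<dots> = (\<integral>\<^sup>+\<rho>. indicator {0<..} \<rho> * ennreal \<rho> * g \<rho> \<partial>lborel) +
                  (\<integral>\<^sup>+\<rho>. indicator {..<0} \<rho> * ennreal (-\<rho>) * g \<rho> \<partial>lborel)"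
    by (rule nn_integral_add) auto
  also have "(\<integral>\<^sup>+\<rho>. indicator {..<0} \<rho> * ennreal (-\<rho>) * g \<rho> \<partial>lborel) =
             (\<integral>\<^sup>+\<rho>. indicator {0<..} \<rho> * ennreal \<rho> * g (-\<rho>) \<partial>lborel)"
    using nn_integral_real_affine[of "\<lambda>\<rho>. indicator {..<0} \<rho> * ennreal (-\<rho>) * g \<rho>" "-1" 0]
    by (simp add: indicator_def)
  also have "(\<integral>\<^sup>+\<rho>. indicator {0<..} \<rho> * ennreal \<rho> * g \<rho> \<partial>lborel) +
             (\<integral>\<^sup>+\<rho>. indicator {0<..} \<rho> * ennreal \<rho> * g (-\<rho>) \<partial>lborel) =
             (\<integral>\<^sup>+\<rho>. indicator {0<..} \<rho> * ennreal \<rho> * (g \<rho> + g (-\<rho>)) \<partial>lborel)"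
    by (subst nn_integral_add[symmetric]) (auto simp: distrib_left)
  finally show ?thesis .
qed

lemma nn_integral_line_rescale:
  fixes f :: "complex \<Rightarrow> ennreal" and s :: real
  assumes [measurable]: "f \<in> borel_measurable borel"
  defines "c \<equiv> 1 / sqrt (1 + s\<^sup>2)"
  shows "(\<integral>\<^sup>+x. ennreal \<bar>x\<bar> * f (Complex x (x * s)) \<partial>lborel) =
    (\<integral>\<^sup>+\<rho>. ennreal \<bar>\<rho>\<bar> * f (of_real \<rho> * Complex c (c * s)) \<partial>lborel) * ennreal (1 / (1 + s\<^sup>2))"
proof -
  have c0: "c > 0"
    unfolding c_def by (simp add: add_pos_nonneg)
  have "(sqrt (1 + s\<^sup>2))\<^sup>2 = 1 + s\<^sup>2"
    by (rule real_sqrt_pow2) simp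
  then have "c * c = 1 / (1 + s\<^sup>2)"
    unfolding c_def by (simp add: power2_eq_square[symmetric] power_divide)
  moreover have "ennreal c * (ennreal \<bar>c * \<rho>\<bar> * f (Complex (c * \<rho>) (c * \<rho> * s))) =
      ennreal (c * c) * (ennreal \<bar>\<rho>\<bar> * f (of_real \<rho> * Complex c (c * s)))" for \<rho>
  proof -
    have "Complex (c * \<rho>) (c * \<rho> * s) = of_real \<rho> * Complex c (c * s)"
      by (simp add: complex_eq_iff)
    moreover have "ennreal c * ennreal \<bar>c * \<rho>\<bar> = ennreal (c * c) * ennreal \<bar>\<rho>\<bar>"
      using c0 by (simp add: abs_mult ennreal_mult'[symmetric] mult_ac)
    ultimately show ?thesis
      by (simp add: mult.assoc[symmetric])
  qed
  then have "(\<integral>\<^sup>+x. ennreal \<bar>x\<bar> * f (Complex x (x * s)) \<partial>lborel) =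
      (\<integral>\<^sup>+\<rho>. ennreal (c * c) * (ennreal \<bar>\<rho>\<bar> * f (of_real \<rho> * Complex c (c * s))) \<partial>lborel)"
    using c0 nn_integral_real_affine[where c=c and t=0 and f="\<lambda>x. ennreal \<bar>x\<bar> * f (Complex x (x * s))"]
    by (simp add: nn_integral_cmult[symmetric])
  ultimately show ?thesis
    by (simp add: nn_integral_cmult mult.commute)
qed

lemma Complex_tan_eq_cis:
  assumes "\<theta> \<in> {-(pi/2)<..<pi/2}"
  shows "Complex (1 / sqrt (1 + (tan \<theta>)\<^sup>2)) (tan \<theta> / sqrt (1 + (tan \<theta>)\<^sup>2)) = cis \<theta>"
proof -
  have cos: "cos \<theta> > 0"
    using assms by (intro cos_gt_zero_pi) auto
  then have "1 + (tan \<theta>)\<^sup>2 = (inverse (cos \<theta>))\<^sup>2"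
    using tan_sec[of \<theta>] by linarith
  then have "sqrt (1 + (tan \<theta>)\<^sup>2) = inverse (cos \<theta>)"
    using cos by simp
  then show ?thesis
    using cos by (simp add: complex_eq_iff tan_def divide_inverse)
qed

text \<open>Polar coordinates on the right half-plane: \<open>y = x s\<close> in the inner integral, Fubini,
  then \<open>s = tan \<theta>\<close>; rays through the origin are integrated in both directions.\<close>

lemma nn_integral_polar_half_plane:
  fixes f :: "complex \<Rightarrow> ennreal"
  assumes [measurable]: "f \<in> borel_measurable borel"
  shows "(\<integral>\<^sup>+z. f z \<partial>lborel) =
    (\<integral>\<^sup>+\<theta>. (\<integral>\<^sup>+\<rho>. ennreal \<bar>\<rho>\<bar> * f (of_real \<rho> * cis \<theta>) \<partial>lborel) * indicator {-(pi/2)<..<pi/2} \<theta> \<partial>lborel)"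
proof -
  define P where "P e = (\<integral>\<^sup>+\<rho>. ennreal \<bar>\<rho>\<bar> * f (of_real \<rho> * e) \<partial>lborel)" for e
  define w where "w s = Complex (1 / sqrt (1 + s\<^sup>2)) (1 / sqrt (1 + s\<^sup>2) * s)" for s
  have [measurable]: "(\<lambda>s. P (w s)) \<in> borel_measurable borel"
    unfolding P_def w_def by measurable
  have "(\<integral>\<^sup>+z. f z \<partial>lborel) = (\<integral>\<^sup>+x. \<integral>\<^sup>+y. f (Complex x y) \<partial>lborel \<partial>lborel)"
    by (rule nn_integral_complex_iterated) simp
  also have "\<dots> = (\<integral>\<^sup>+x. \<integral>\<^sup>+s. ennreal \<bar>x\<bar> * f (Complex x (x * s)) \<partial>lborel \<partial>lborel)"
  proof (rule nn_integral_cong_AE, rule eventually_mono[OF AE_lborel_singleton[of 0]])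
    fix x :: real assume "x \<noteq> 0"
    then have "(\<integral>\<^sup>+y. f (Complex x y) \<partial>lborel) = ennreal \<bar>x\<bar> * (\<integral>\<^sup>+s. f (Complex x (0 + x * s)) \<partial>lborel)"
      by (intro nn_integral_real_affine) auto
    then show "(\<integral>\<^sup>+y. f (Complex x y) \<partial>lborel) = (\<integral>\<^sup>+s. ennreal \<bar>x\<bar> * f (Complex x (x * s)) \<partial>lborel)"
      by (simp add: nn_integral_cmult)
  qed
  also have "\<dots> = (\<integral>\<^sup>+s. \<integral>\<^sup>+x. ennreal \<bar>x\<bar> * f (Complex x (x * s)) \<partial>lborel \<partial>lborel)"
    by (rule lborel_pair.Fubini'[symmetric]) (simp add: case_prod_unfold)
  also have "\<dots> = (\<integral>\<^sup>+s. P (w s) * ennreal (1 / (1 + s\<^sup>2)) \<partial>lborel)"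
    unfolding P_def w_def by (intro nn_integral_cong nn_integral_line_rescale) simp
  also have "\<dots> = (\<integral>\<^sup>+\<theta>. P (w (tan \<theta>)) * indicator {-(pi/2)<..<pi/2} \<theta> \<partial>lborel)"
    by (rule nn_integral_tan_substitution) simp
  also have "\<dots> = (\<integral>\<^sup>+\<theta>. P (cis \<theta>) * indicator {-(pi/2)<..<pi/2} \<theta> \<partial>lborel)"
    unfolding w_def by (intro nn_integral_cong) (simp add: Complex_tan_eq_cis indicator_def)
  finally show ?thesis
    unfolding P_def .
qed

lemma nn_integral_periodic_window:
  fixes H :: "real \<Rightarrow> ennreal"
  assumes [measurable]: "H \<in> borel_measurable borel" and "T > 0" and periodic: "\<And>x. H (x + T) = H x"
  shows "(\<integral>\<^sup>+\<theta>. H \<theta> * indicator {c..<c+T} \<theta> \<partial>lborel) = (\<integral>\<^sup>+\<theta>. H \<theta> * indicator {0..<T} \<theta> \<partial>lborel)"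
proof -
  interpret periodic_fun_simple H T
    by unfold_locales (rule periodic)
  define k where "k = \<lfloor>c / T\<rfloor>"
  define c' where "c' = c - of_int k * T"
  have "of_int k \<le> c / T" "c / T < of_int k + 1"
    unfolding k_def by linarith+
  then have c': "0 \<le> c'" "c' < T"
    unfolding c'_def using \<open>T > 0\<close> by (simp_all add: field_simps)
  have "(\<integral>\<^sup>+\<theta>. H \<theta> * indicator {c..<c+T} \<theta> \<partial>lborel) =
        (\<integral>\<^sup>+\<theta>. H (of_int k * T + \<theta>) * indicator {c..<c+T} (of_int k * T + \<theta>) \<partial>lborel)"
    by (rule nn_integral_lborel_shift) simp
  also have "\<dots> = (\<integral>\<^sup>+\<theta>. H \<theta> * indicator {c'..<T} \<theta> + H \<theta> * indicator {T..<c'+T} \<theta> \<partial>lborel)"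
    using plus_of_int c' unfolding c'_def
    by (intro nn_integral_cong) (auto simp: indicator_def add.commute)
  also have "\<dots> = (\<integral>\<^sup>+\<theta>. H \<theta> * indicator {c'..<T} \<theta> \<partial>lborel) + (\<integral>\<^sup>+\<theta>. H \<theta> * indicator {T..<c'+T} \<theta> \<partial>lborel)"
    by (rule nn_integral_add) auto
  also have "(\<integral>\<^sup>+\<theta>. H \<theta> * indicator {T..<c'+T} \<theta> \<partial>lborel) = (\<integral>\<^sup>+\<theta>. H \<theta> * indicator {0..<c'} \<theta> \<partial>lborel)"
    by (subst nn_integral_lborel_shift[of _ T]) (auto simp: indicator_def add.commute plus_period)
  also have "(\<integral>\<^sup>+\<theta>. H \<theta> * indicator {c'..<T} \<theta> \<partial>lborel) + (\<integral>\<^sup>+\<theta>. H \<theta> * indicator {0..<c'} \<theta> \<partial>lborel)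
      = (\<integral>\<^sup>+\<theta>. H \<theta> * indicator {0..<T} \<theta> \<partial>lborel)"
    using c' by (subst nn_integral_add[symmetric]) (auto intro!: nn_integral_cong simp: indicator_def)
  finally show ?thesis .
qed

lemma nn_integral_polar:
  fixes f :: "complex \<Rightarrow> ennreal"
  assumes [measurable]: "f \<in> borel_measurable borel"
  shows "(\<integral>\<^sup>+z. f z \<partial>lborel) =
    (\<integral>\<^sup>+\<theta>. (\<integral>\<^sup>+\<rho>. indicator {0<..} \<rho> * ennreal \<rho> * f (of_real \<rho> * cis \<theta>) \<partial>lborel) * indicator {c..<c+2*pi} \<theta> \<partial>lborel)"
proof -
  define J where "J \<theta> = (\<integral>\<^sup>+\<rho>. indicator {0<..} \<rho> * ennreal \<rho> * f (of_real \<rho> * cis \<theta>) \<partial>lborel)" for \<theta>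
  have [measurable]: "J \<in> borel_measurable borel"
    unfolding J_def by measurable
  have J_periodic: "J (\<theta> + 2*pi) = J \<theta>" for \<theta>
    unfolding J_def by (simp add: cis.code)
  have "(\<integral>\<^sup>+\<rho>. ennreal \<bar>\<rho>\<bar> * f (of_real \<rho> * cis \<theta>) \<partial>lborel) = J \<theta> + J (\<theta> + pi)" for \<theta>
  proof -
    have "- (of_real \<rho> * cis \<theta>) = of_real \<rho> * cis (\<theta> + pi)" for \<rho>
      by (simp add: cis_def complex_eq_iff)
    then show ?thesis
      unfolding J_def by (subst nn_integral_abs_mult_split) (auto simp: distrib_left intro!: nn_integral_add)
  qed
  then have "(\<integral>\<^sup>+z. f z \<partial>lborel) =
      (\<integral>\<^sup>+\<theta>. J \<theta> * indicator {-(pi/2)<..<pi/2} \<theta> + J (\<theta> + pi) * indicator {-(pi/2)<..<pi/2} \<theta> \<partial>lborel)"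
    by (simp add: nn_integral_polar_half_plane distrib_right)
  also have "\<dots> = (\<integral>\<^sup>+\<theta>. J \<theta> * indicator {-(pi/2)<..<pi/2} \<theta> \<partial>lborel) +
                  (\<integral>\<^sup>+\<theta>. J (pi + \<theta>) * indicator {-(pi/2)<..<pi/2} \<theta> \<partial>lborel)"
    by (subst nn_integral_add) (auto simp: add.commute)
  also have "(\<integral>\<^sup>+\<theta>. J (pi + \<theta>) * indicator {-(pi/2)<..<pi/2} \<theta> \<partial>lborel) =
             (\<integral>\<^sup>+\<theta>. J \<theta> * indicator {pi/2<..<3*pi/2} \<theta> \<partial>lborel)"
    by (subst nn_integral_lborel_shift[of _ pi]) (auto intro!: nn_integral_cong simp: indicator_def)
  also have "(\<integral>\<^sup>+\<theta>. J \<theta> * indicator {-(pi/2)<..<pi/2} \<theta> \<partial>lborel) +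
             (\<integral>\<^sup>+\<theta>. J \<theta> * indicator {pi/2<..<3*pi/2} \<theta> \<partial>lborel) =
             (\<integral>\<^sup>+\<theta>. J \<theta> * indicator {-(pi/2)..<-(pi/2)+2*pi} \<theta> \<partial>lborel)"
  proof (subst nn_integral_add[symmetric], simp, simp, rule nn_integral_cong_AE)
    show "AE \<theta> in lborel. J \<theta> * indicator {-(pi/2)<..<pi/2} \<theta> + J \<theta> * indicator {pi/2<..<3*pi/2} \<theta> =
               J \<theta> * indicator {-(pi/2)..<-(pi/2)+2*pi} \<theta>"
      using AE_lborel_singleton[of "pi/2"] AE_lborel_singleton[of "-(pi/2)"]
      by eventually_elim (auto simp: indicator_def)
  qed
  also have "\<dots> = (\<integral>\<^sup>+\<theta>. J \<theta> * indicator {0..<2*pi} \<theta> \<partial>lborel)"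
    using nn_integral_periodic_window[of J "2*pi" "-(pi/2)"] J_periodic by simp
  also have "\<dots> = (\<integral>\<^sup>+\<theta>. J \<theta> * indicator {c..<c+2*pi} \<theta> \<partial>lborel)"
    using nn_integral_periodic_window[of J "2*pi" c] J_periodic by simp
  finally show ?thesis
    unfolding J_def .
qed

lemma closed_circ_arc: "closed (circ_arc a l)"
proof -
  have "circ_arc a l = cis ` {a..a+l}"
    unfolding circ_arc_def by auto
  moreover have "compact (cis ` {a..a+l})"
    by (intro compact_continuous_image continuous_intros) auto
  ultimately show ?thesis
    by (simp add: compact_imp_closed)
qed

lemma carleson_box_borel [measurable]: "carleson_box a l \<in> sets borel"
proof -
  have [measurable]: "circ_arc a l \<in> sets borel"
    using closed_circ_arc by (rule borel_closed)
  show ?thesis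
    unfolding carleson_box_def by measurable
qed

lemma carleson_box_subset_ball: "carleson_box a l \<subseteq> ball 0 1"
  unfolding carleson_box_def by auto

lemma cis_in_circ_arc_iff:
  assumes "a \<le> \<theta>" "\<theta> < a + 2*pi"
  shows "cis \<theta> \<in> circ_arc a l \<longleftrightarrow> \<theta> \<le> a + l"
proof
  assume "cis \<theta> \<in> circ_arc a l"
  then obtain t where t: "cis \<theta> = cis t" "a \<le> t" "t \<le> a + l"
    unfolding circ_arc_def by auto
  then have "sin t = sin \<theta> \<and> cos t = cos \<theta>"
    by (metis cis.sel(1) cis.sel(2))
  then obtain n :: int where n: "t = \<theta> + 2 * pi * n"
    using sin_cos_eq_iff by blast
  show "\<theta> \<le> a + l"
  proof (rule ccontr)
    assume "\<not> \<theta> \<le> a + l"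
    then have "-2*pi < 2*pi*n" "2*pi*n < 0"
      using n t assms by linarith+
    then have "real_of_int n \<le> -1"
      by (simp add: mult_less_0_iff)
    then have "2*pi*n \<le> 2*pi*(-1)"
      by (intro mult_left_mono) auto
    then show False
      using \<open>-2*pi < 2*pi*n\<close> by linarith
  qed
qed (use assms in \<open>auto simp: circ_arc_def\<close>)

lemma polar_in_carleson_box_iff:
  assumes "0 < \<rho>" "a \<le> \<theta>" "\<theta> < a + 2*pi"
  shows "of_real \<rho> * cis \<theta> \<in> carleson_box a l \<longleftrightarrow> \<rho> < 1 \<and> 1 - \<rho> \<le> l / (2*pi) \<and> \<theta> \<le> a + l"
proof -
  have "norm (of_real \<rho> * cis \<theta>) = \<rho>" "(of_real \<rho> * cis \<theta>) / complex_of_real \<rho> = cis \<theta>"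
    using assms by (simp_all add: norm_mult)
  then show ?thesis
    using cis_in_circ_arc_iff[OF assms(2,3)] unfolding carleson_box_def by auto
qed

lemma nn_integral_carleson_box_polar:
  fixes g :: "complex \<Rightarrow> ennreal"
  assumes [measurable]: "g \<in> borel_measurable borel" and "l \<le> 2*pi"
  shows "(\<integral>\<^sup>+z. g z * indicator (carleson_box a l) z \<partial>lborel) =
    (\<integral>\<^sup>+\<theta>. indicator {a..a+l} \<theta> *
       (\<integral>\<^sup>+\<rho>. indicator {0<..<1} \<rho> * indicator {1 - l/(2*pi)..} \<rho> * ennreal \<rho> * g (of_real \<rho> * cis \<theta>) \<partial>lborel) \<partial>lborel)"
proof -
  define f where "f z = g z * indicator (carleson_box a l) z" for z
  define I where "I \<theta> = (\<integral>\<^sup>+\<rho>. indicator {0<..<1} \<rho> * indicator {1 - l/(2*pi)..} \<rho> * ennreal \<rho> * g (of_real \<rho> * cis \<theta>) \<partial>lborel)" for \<theta>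
  have "(\<integral>\<^sup>+z. f z \<partial>lborel) =
      (\<integral>\<^sup>+\<theta>. (\<integral>\<^sup>+\<rho>. indicator {0<..} \<rho> * ennreal \<rho> * f (of_real \<rho> * cis \<theta>) \<partial>lborel) * indicator {a..<a+2*pi} \<theta> \<partial>lborel)"
    unfolding f_def by (rule nn_integral_polar) simp
  also have "\<dots> = (\<integral>\<^sup>+\<theta>. indicator {a..a+l} \<theta> * I \<theta> \<partial>lborel)"
  proof (rule nn_integral_cong_AE, rule eventually_mono[OF AE_lborel_singleton[of "a+2*pi"]])
    fix \<theta> :: real assume "\<theta> \<noteq> a + 2*pi"
    show "(\<integral>\<^sup>+\<rho>. indicator {0<..} \<rho> * ennreal \<rho> * f (of_real \<rho> * cis \<theta>) \<partial>lborel) * indicator {a..<a+2*pi} \<theta>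
        = indicator {a..a+l} \<theta> * I \<theta>"
    proof (cases "a \<le> \<theta> \<and> \<theta> < a + 2*pi")
      case True
      have "indicator {0<..} \<rho> * ennreal \<rho> * f (of_real \<rho> * cis \<theta>) =
          indicator {a..a+l} \<theta> * (indicator {0<..<1} \<rho> * indicator {1 - l/(2*pi)..} \<rho> * ennreal \<rho> * g (of_real \<rho> * cis \<theta>))" for \<rho>
        using polar_in_carleson_box_iff[of \<rho> a \<theta> l] True unfolding f_def
        by (cases "\<rho> > 0") (auto simp: indicator_def)
      then show ?thesis
        using True unfolding I_def by (simp add: nn_integral_cmult[symmetric])
    next
      case False
      with \<open>\<theta> \<noteq> a + 2*pi\<close> \<open>l \<le> 2*pi\<close> have "\<theta> \<notin> {a..a+l}"
        by auto
      with False show ?thesis by simp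
    qed
  qed
  finally show ?thesis
    unfolding f_def I_def .
qed

section \<open>The Poisson integral\<close>

definition poisson_kernel :: "complex \<Rightarrow> real \<Rightarrow> real" where
  "poisson_kernel b \<theta> = (1 - (norm b)\<^sup>2) / (norm (cis \<theta> - b))\<^sup>2"

lemma poisson_kernel_nonneg: "norm b \<le> 1 \<Longrightarrow> 0 \<le> poisson_kernel b \<theta>"
  unfolding poisson_kernel_def by (simp add: power_le_one)

lemma poisson_kernel_periodic: "poisson_kernel b (\<theta> + 2*pi) = poisson_kernel b \<theta>"
  unfolding poisson_kernel_def by (simp add: cis.code)

lemma cauchy_kernel_plus_reflection:
  fixes e b :: complex
  assumes e: "norm e = 1" and b: "norm b < 1"
  shows "e / (e - b) + cnj b * e / (1 - cnj b * e) = of_real ((1 - (norm b)\<^sup>2) / (norm (e - b))\<^sup>2)"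
proof -
  have ee: "e * cnj e = 1"
    using complex_norm_square[of e] e by simp
  have "e - b \<noteq> 0" "e \<noteq> 0"
    using e b by auto
  have reflect: "1 - cnj b * e = e * cnj (e - b)"
    using ee by (simp add: algebra_simps)
  have "e / (e - b) + cnj b * e / (1 - cnj b * e) = e / (e - b) + cnj b / cnj (e - b)"
    unfolding reflect using \<open>e \<noteq> 0\<close> by simp
  also have "\<dots> = (e * cnj (e - b) + cnj b * (e - b)) / ((e - b) * cnj (e - b))"
    using \<open>e - b \<noteq> 0\<close> by (simp add: field_simps)
  also have "e * cnj (e - b) + cnj b * (e - b) = 1 - b * cnj b"
    using ee by (simp add: algebra_simps)
  also have "(1 - b * cnj b) / ((e - b) * cnj (e - b)) = of_real ((1 - (norm b)\<^sup>2) / (norm (e - b))\<^sup>2)"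
    by (simp only: of_real_divide of_real_diff of_real_1 complex_norm_square)
  finally show ?thesis .
qed

text \<open>Cauchy's formula for \<open>G w / (w - b)\<close> plus Cauchy's theorem for
  \<open>cnj b * G w / (1 - cnj b * w)\<close>, whose pole \<open>1 / cnj b\<close> lies outside the unit circle.\<close>

lemma has_contour_integral_cauchy_plus_reflection:
  fixes G :: "complex \<Rightarrow> complex"
  assumes holo: "G holomorphic_on ball 0 R" and "R > 1" and b: "norm b < 1"
  shows "((\<lambda>w. G w / (w - b) + cnj b * G w / (1 - cnj b * w)) has_contour_integral
    (2 * of_real pi * \<i> * G b)) (circlepath 0 1)"
proof -
  define R' where "R' = (if b = 0 then R else min R (1 / norm b))"
  have "R' > 1"
    using \<open>R > 1\<close> b unfolding R'_def by (auto simp: field_simps)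
  have holo': "G holomorphic_on ball 0 R'"
    by (rule holomorphic_on_subset[OF holo]) (auto simp: R'_def)
  have nz: "1 - cnj b * w \<noteq> 0" if "w \<in> ball 0 R'" for w
  proof
    assume "1 - cnj b * w = 0"
    then have "norm b * norm w = 1"
      by (metis norm_one right_minus_eq norm_mult complex_mod_cnj)
    moreover have "b \<noteq> 0 \<Longrightarrow> norm b * norm w < 1"
      using that unfolding R'_def by (simp add: field_simps)
    ultimately show False by force
  qed
  have "((\<lambda>w. G w / (w - b)) has_contour_integral (2 * of_real pi * \<i> * G b)) (circlepath 0 1)"
    using b \<open>R' > 1\<close> by (intro Cauchy_integral_circlepath_simple holomorphic_on_subset[OF holo']) auto
  moreover have "((\<lambda>w. cnj b * G w / (1 - cnj b * w)) has_contour_integral 0) (circlepath 0 1)"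
  proof (rule Cauchy_theorem_convex_simple[of _ "ball 0 R'"])
    show "(\<lambda>w. cnj b * G w / (1 - cnj b * w)) holomorphic_on ball 0 R'"
      using holo' nz by (intro holomorphic_intros) auto
    show "path_image (circlepath 0 1) \<subseteq> ball 0 R'"
      using \<open>R' > 1\<close> by auto
  qed auto
  ultimately show ?thesis
    using has_contour_integral_add by fastforce
qed

lemma poisson_integral_formula:
  fixes G :: "complex \<Rightarrow> complex"
  assumes holo: "G holomorphic_on ball 0 R" and "R > 1" and b: "norm b < 1"
  shows "((\<lambda>t. of_real (poisson_kernel b (2*pi*t)) * G (cis (2*pi*t))) has_integral G b) {0..1}"
proof -
  have path: "circlepath 0 1 t = cis (2*pi*t)" for t
    by (simp add: circlepath cis_conv_exp mult_ac)
  have speed: "vector_derivative (circlepath 0 1) (at t within {0..1}) = 2 * pi * \<i> * cis (2*pi*t)"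
    if "t \<in> {0..1}" for t
    using vector_derivative_circlepath01[of t 0 1] that by (simp add: cis_conv_exp mult_ac)
  have parametrized: "((\<lambda>t. (G (cis (2*pi*t)) / (cis (2*pi*t) - b) +
      cnj b * G (cis (2*pi*t)) / (1 - cnj b * cis (2*pi*t))) * (2 * pi * \<i> * cis (2*pi*t)))
      has_integral (2 * of_real pi * \<i> * G b)) {0..1}"
    using has_contour_integral_cauchy_plus_reflection[OF assms] unfolding has_contour_integral_def
    by (rule has_integral_cong[THEN iffD1, rotated]) (simp add: speed path)
  have integrand: "(G (cis (2*pi*t)) / (cis (2*pi*t) - b) + cnj b * G (cis (2*pi*t)) / (1 - cnj b * cis (2*pi*t))) *
      (2 * pi * \<i> * cis (2*pi*t)) =
      (2 * of_real pi * \<i>) * (of_real (poisson_kernel b (2*pi*t)) * G (cis (2*pi*t)))" for t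
  proof -
    have "(G (cis (2*pi*t)) / (cis (2*pi*t) - b) + cnj b * G (cis (2*pi*t)) / (1 - cnj b * cis (2*pi*t))) *
        (2 * pi * \<i> * cis (2*pi*t)) = (2 * of_real pi * \<i>) * G (cis (2*pi*t)) *
        (cis (2*pi*t) / (cis (2*pi*t) - b) + cnj b * cis (2*pi*t) / (1 - cnj b * cis (2*pi*t)))"
      by (simp add: field_simps)
    then show ?thesis
      using cauchy_kernel_plus_reflection[of "cis (2*pi*t)" b] b unfolding poisson_kernel_def by simp
  qed
  have "((\<lambda>t. (2 * of_real pi * \<i>) * (of_real (poisson_kernel b (2*pi*t)) * G (cis (2*pi*t))))
      has_integral (2 * of_real pi * \<i>) * G b) {0..1}"
    using parametrized unfolding integrand by (simp add: mult.assoc)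
  from has_integral_mult_right[OF this, of "inverse (2 * of_real pi * \<i>)"]
  show ?thesis
    by (simp add: field_simps)
qed

lemma poisson_integral_formula_Re_dilated:
  fixes F :: "complex \<Rightarrow> complex"
  assumes holo: "F holomorphic_on ball 0 1" and \<rho>: "0 < \<rho>" "\<rho> < 1" and b: "norm b < 1"
  shows "((\<lambda>t. poisson_kernel b (2*pi*t) * Re (F (of_real \<rho> * cis (2*pi*t)))) has_integral
    Re (F (of_real \<rho> * b))) {0..1}"
proof -
  have "of_real \<rho> * w \<in> ball 0 1" if "norm w < 1 / \<rho>" for w :: complex
    using that \<rho> by (simp add: norm_mult field_simps)
  then have "(\<lambda>w. F (of_real \<rho> * w)) holomorphic_on ball 0 (1 / \<rho>)"
    by (intro holomorphic_on_compose_gen[OF _ holo, unfolded o_def] holomorphic_intros) auto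
  from has_integral_linear[OF poisson_integral_formula[OF this _ b] bounded_linear_Re]
  show ?thesis
    using \<rho> by (simp add: o_def field_simps)
qed

lemma continuous_on_poisson_Re_dilated:
  fixes F :: "complex \<Rightarrow> complex"
  assumes holo: "F holomorphic_on ball 0 1" and \<rho>: "0 \<le> \<rho>" "\<rho> < 1" and b: "norm b < 1"
  shows "continuous_on UNIV (\<lambda>\<theta>. poisson_kernel b \<theta> * Re (F (of_real \<rho> * cis \<theta>)))"
proof -
  have "continuous_on (range (\<lambda>\<theta>. of_real \<rho> * cis \<theta>)) F"
    using \<rho> by (intro continuous_on_subset[OF holomorphic_on_imp_continuous_on[OF holo]])
      (auto simp: norm_mult)
  then have "continuous_on UNIV (\<lambda>\<theta>. F (of_real \<rho> * cis \<theta>))"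
    using continuous_on_compose[of UNIV "\<lambda>\<theta>. of_real \<rho> * cis \<theta>" F]
    by (simp add: o_def continuous_on_mult_left continuous_on_cis)
  moreover have "cis \<theta> - b \<noteq> 0" for \<theta>
    using b by auto
  ultimately show ?thesis
    unfolding poisson_kernel_def by (intro continuous_intros) auto
qed

lemma nn_integral_poisson_Re:
  fixes F :: "complex \<Rightarrow> complex"
  assumes holo: "F holomorphic_on ball 0 1" and nonneg: "\<And>z. z \<in> ball 0 1 \<Longrightarrow> 0 \<le> Re (F z)"
    and \<rho>: "0 < \<rho>" "\<rho> < 1" and b: "norm b < 1"
  shows "(\<integral>\<^sup>+\<theta>. ennreal (poisson_kernel b \<theta> * Re (F (of_real \<rho> * cis \<theta>))) * indicator {c..<c+2*pi} \<theta> \<partial>lborel)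
    = ennreal (2*pi * Re (F (of_real \<rho> * b)))"
proof -
  define g where "g \<theta> = poisson_kernel b \<theta> * Re (F (of_real \<rho> * cis \<theta>))" for \<theta>
  have g_nonneg: "0 \<le> g \<theta>" for \<theta>
    unfolding g_def using \<rho> b
    by (intro mult_nonneg_nonneg poisson_kernel_nonneg nonneg) (auto simp: norm_mult)
  have "((\<lambda>t. g (2*pi*t)) has_integral Re (F (of_real \<rho> * b))) {0..1}"
    unfolding g_def by (rule poisson_integral_formula_Re_dilated[OF holo \<rho> b])
  from nn_integral_has_integral_lebesgue'[OF _ this] g_nonneg
  have int01: "(\<integral>\<^sup>+t. ennreal (g (2*pi*t)) * indicator {0..1} t \<partial>lborel) = ennreal (Re (F (of_real \<rho> * b)))"
    by simp
  have "continuous_on UNIV g"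
    unfolding g_def using continuous_on_poisson_Re_dilated[OF holo _ _ b] \<rho> by simp
  then have [measurable]: "g \<in> borel_measurable borel"
    by (rule borel_measurable_continuous_onI)
  have "(\<integral>\<^sup>+\<theta>. ennreal (g \<theta>) * indicator {c..<c+2*pi} \<theta> \<partial>lborel)
      = (\<integral>\<^sup>+\<theta>. ennreal (g \<theta>) * indicator {0..<2*pi} \<theta> \<partial>lborel)"
  proof (rule nn_integral_periodic_window)
    show "ennreal (g (\<theta> + 2*pi)) = ennreal (g \<theta>)" for \<theta>
      unfolding g_def by (simp add: poisson_kernel_periodic cis.code)
  qed auto
  also have "\<dots> = (\<integral>\<^sup>+\<theta>. ennreal (g \<theta>) * indicator {0..2*pi} \<theta> \<partial>lborel)"
    by (intro nn_integral_cong_AE eventually_mono[OF AE_lborel_singleton[of "2*pi"]]) (auto simp: indicator_def)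
  also have "\<dots> = ennreal (2*pi) * (\<integral>\<^sup>+t. ennreal (g (2*pi*t)) * indicator {0..1} t \<partial>lborel)"
    by (rule nn_integral_Icc_rescale) simp_all
  also have "\<dots> = ennreal (2*pi * Re (F (of_real \<rho> * b)))"
    unfolding int01 by (simp add: ennreal_mult')
  finally show ?thesis
    unfolding g_def .
qed

section \<open>Harnack's inequality\<close>

lemma Moebius_denominator_nonzero:
  assumes "norm w < 1" "norm z < 1"
  shows "1 - cnj w * z \<noteq> 0"
proof
  assume "1 - cnj w * z = 0"
  then have "norm (cnj w * z) = 1"
    by (metis norm_one right_minus_eq)
  moreover have "norm w * norm z < 1 * 1"
    using assms by (intro mult_strict_mono') auto
  ultimately show False
    by (simp add: norm_mult)
qed

lemma one_minus_norm_Moebius_squared: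
  assumes "norm w < 1" "norm z < 1"
  shows "1 - norm (Moebius_function 0 w z) ^ 2 = ((1 - norm w ^ 2) / (norm (1 - cnj w * z) ^ 2)) * (1 - norm z ^ 2)"
proof -
  have "norm (1 - cnj w * z) \<noteq> 0"
    using Moebius_denominator_nonzero[OF assms] by simp
  moreover have "(norm (1 - cnj w * z))\<^sup>2 - (norm (z - w))\<^sup>2 = (1 - (norm w)\<^sup>2) * (1 - (norm z)\<^sup>2)"
    unfolding cmod_power2 by (simp add: power2_eq_square algebra_simps)
  ultimately show ?thesis
    by (simp add: Moebius_function_simple norm_divide power_divide field_simps)
qed

lemma norm_add_cnj_squared_minus_norm_diff_squared:
  fixes x q :: complex
  shows "(norm (x + cnj q))\<^sup>2 - (norm (x - q))\<^sup>2 = 4 * Re x * Re q"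
  unfolding cmod_power2 by (simp add: power2_eq_square algebra_simps)

text \<open>For \<open>Re p > 0\<close>, \<open>X \<mapsto> (X - p) / (X + cnj p)\<close> maps the right half-plane into the unit
  disc and \<open>p\<close> to \<open>0\<close>, and \<open>Re X / Re p\<close> can be read off from the image.\<close>

lemma norm_half_plane_to_disc_lt_1:
  assumes "Re X > 0" "Re p > 0"
  shows "norm ((X - p) / (X + cnj p)) < 1"
proof -
  have "(norm (X + cnj p))\<^sup>2 - (norm (X - p))\<^sup>2 > 0"
    using norm_add_cnj_squared_minus_norm_diff_squared[of X p] assms by simp
  then have "norm (X - p) < norm (X + cnj p)"
    by (smt (verit) norm_ge_zero power_mono)
  then show ?thesis
    by (simp add: norm_divide divide_less_eq)
qed

lemma half_plane_to_disc_ratio: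
  assumes "Re X > 0" "Re p > 0"
  shows "(1 - (norm ((X - p) / (X + cnj p)))\<^sup>2) / (norm (1 - (X - p) / (X + cnj p)))\<^sup>2 = Re X / Re p"
proof -
  define D where "D = X + cnj p"
  define H where "H = (X - p) / D"
  have "Re D > 0"
    using assms unfolding D_def by simp
  then have "D \<noteq> 0"
    by auto
  have "1 - H = (p + cnj p) / D"
    using \<open>D \<noteq> 0\<close> unfolding H_def D_def by (simp add: field_simps)
  also have "p + cnj p = of_real (2 * Re p)"
    by (simp add: complex_eq_iff)
  finally have n1: "norm (1 - H) = 2 * Re p / norm D"
    using assms by (simp add: norm_divide)
  have "norm H = norm (X - p) / norm D"
    unfolding H_def by (simp add: norm_divide)
  then have "1 - (norm H)\<^sup>2 = ((norm D)\<^sup>2 - (norm (X - p))\<^sup>2) / (norm D)\<^sup>2"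
    using \<open>D \<noteq> 0\<close> by (simp add: power_divide diff_divide_distrib)
  also have "(norm D)\<^sup>2 - (norm (X - p))\<^sup>2 = 4 * Re X * Re p"
    unfolding D_def by (rule norm_add_cnj_squared_minus_norm_diff_squared)
  finally have "(1 - (norm H)\<^sup>2) / (norm (1 - H))\<^sup>2 = (4 * Re X * Re p / (norm D)\<^sup>2) / (2 * Re p / norm D)\<^sup>2"
    unfolding n1 by simp
  also have "\<dots> = Re X / Re p"
    using \<open>D \<noteq> 0\<close> assms by (simp add: power2_eq_square field_simps)
  finally show ?thesis
    unfolding H_def D_def .
qed

lemma ratio_bounds_from_norm:
  fixes t r d :: real
  assumes "0 \<le> t" "t \<le> r" "r < 1" "1 - t \<le> d" "d \<le> 1 + t" "0 < d"
  shows "(1 - r\<^sup>2) / 4 \<le> (1 - t\<^sup>2) / d\<^sup>2" and "(1 - t\<^sup>2) / d\<^sup>2 \<le> (1 + r) / (1 - r)"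
proof -
  have "t < 1"
    using assms by linarith
  then have "0 \<le> 1 - t\<^sup>2"
    using assms by (simp add: power_le_one)
  have "d\<^sup>2 \<le> 2\<^sup>2"
    using assms \<open>t < 1\<close> by (intro power_mono) auto
  have "(1 - r\<^sup>2) / 4 \<le> (1 - t\<^sup>2) / 4"
    using assms by (intro divide_right_mono) (auto intro: power_mono)
  also have "\<dots> \<le> (1 - t\<^sup>2) / d\<^sup>2"
    using \<open>0 \<le> 1 - t\<^sup>2\<close> \<open>d\<^sup>2 \<le> 2\<^sup>2\<close> assms by (intro divide_left_mono) auto
  finally show "(1 - r\<^sup>2) / 4 \<le> (1 - t\<^sup>2) / d\<^sup>2" .
  have "(1 - t)\<^sup>2 \<le> d\<^sup>2"
    using assms \<open>t < 1\<close> by (intro power_mono) auto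
  then have "(1 - t\<^sup>2) / d\<^sup>2 \<le> (1 - t\<^sup>2) / (1 - t)\<^sup>2"
    using \<open>0 \<le> 1 - t\<^sup>2\<close> \<open>t < 1\<close> assms by (intro divide_left_mono) auto
  also have "\<dots> = (1 + t) / (1 - t)"
  proof -
    have "1 - t\<^sup>2 = (1 + t) * (1 - t)"
      by (simp add: power2_eq_square algebra_simps)
    then show ?thesis
      using \<open>t < 1\<close> by (simp add: power2_eq_square)
  qed
  also have "\<dots> \<le> (1 + r) / (1 - r)"
    using assms \<open>t < 1\<close> by (simp add: field_simps)
  finally show "(1 - t\<^sup>2) / d\<^sup>2 \<le> (1 + r) / (1 - r)" .
qed

lemma Schwarz_Pick_half_plane:
  fixes F :: "complex \<Rightarrow> complex"
  assumes holo: "F holomorphic_on ball 0 1" and pos: "\<And>z. z \<in> ball 0 1 \<Longrightarrow> Re (F z) > 0"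
    and a: "norm a < 1" and z: "norm z < 1"
  shows "norm ((F z - F a) / (F z + cnj (F a))) \<le> norm (Moebius_function 0 a z)"
proof -
  define H where "H w = (F w - F a) / (F w + cnj (F a))" for w
  define K where "K w = H (Moebius_function 0 (-a) w)" for w
  have den: "F w + cnj (F a) \<noteq> 0" if "norm w < 1" for w
  proof -
    have "Re (F w + cnj (F a)) \<noteq> Re 0"
      using pos[of w] pos[of a] that a by simp
    then show ?thesis by metis
  qed
  have "H holomorphic_on ball 0 1"
    unfolding H_def using den holo by (intro holomorphic_intros) auto
  moreover have "Moebius_function 0 (-a) holomorphic_on ball 0 1"
    using a by (intro Moebius_function_holomorphic) simp
  moreover have M_disc: "norm (Moebius_function 0 (-a) w) < 1" if "norm w < 1" for w
    using a that by (intro Moebius_function_norm_lt_1) auto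
  ultimately have "(H \<circ> Moebius_function 0 (-a)) holomorphic_on ball 0 1"
    by (intro holomorphic_on_compose_gen) (auto simp: M_disc)
  then have "K holomorphic_on ball 0 1"
    unfolding K_def o_def .
  moreover have "K 0 = 0"
    unfolding K_def H_def by (simp add: Moebius_function_of_zero)
  moreover have "norm (K w) < 1" if "norm w < 1" for w
    unfolding K_def H_def using pos M_disc[OF that] pos[of a] a
    by (intro norm_half_plane_to_disc_lt_1) auto
  moreover have "norm (Moebius_function 0 a z) < 1"
    using a z by (intro Moebius_function_norm_lt_1)
  ultimately have "norm (K (Moebius_function 0 a z)) \<le> norm (Moebius_function 0 a z)"
    by (rule Schwarz_Lemma(1))
  moreover have "K (Moebius_function 0 a z) = H z"
    unfolding K_def using a z by (subst Moebius_function_compose) auto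
  ultimately show ?thesis
    unfolding H_def by simp
qed

lemma Harnack_half_plane:
  fixes F :: "complex \<Rightarrow> complex"
  assumes holo: "F holomorphic_on ball 0 1" and pos: "\<And>z. z \<in> ball 0 1 \<Longrightarrow> Re (F z) > 0"
    and a: "norm a < 1" and z: "norm z < 1"
  defines "r \<equiv> norm (Moebius_function 0 a z)"
  shows "Re (F a) * (1 - r\<^sup>2) / 4 \<le> Re (F z)"
    and "Re (F z) \<le> Re (F a) * (1 + r) / (1 - r)"
proof -
  define H where "H = (F z - F a) / (F z + cnj (F a))"
  have Re: "Re (F z) > 0" "Re (F a) > 0"
    using pos a z by auto
  have "norm H \<le> r" "r < 1"
    unfolding H_def r_def using Schwarz_Pick_half_plane[OF holo pos a z] Moebius_function_norm_lt_1[OF a z]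
    by auto
  moreover have "1 - norm H \<le> norm (1 - H)" "norm (1 - H) \<le> 1 + norm H"
    using norm_triangle_ineq2[of 1 H] norm_triangle_ineq4[of 1 H] by simp_all
  moreover have "norm (1 - H) > 0"
    using \<open>norm H \<le> r\<close> \<open>r < 1\<close> by (cases "H = 1") auto
  ultimately have "(1 - r\<^sup>2) / 4 \<le> (1 - (norm H)\<^sup>2) / (norm (1 - H))\<^sup>2"
    "(1 - (norm H)\<^sup>2) / (norm (1 - H))\<^sup>2 \<le> (1 + r) / (1 - r)"
    using ratio_bounds_from_norm[OF norm_ge_zero] by blast+
  moreover have "(1 - (norm H)\<^sup>2) / (norm (1 - H))\<^sup>2 = Re (F z) / Re (F a)"
    unfolding H_def by (rule half_plane_to_disc_ratio[OF Re])
  moreover have "0 < 1 - r"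
    using \<open>r < 1\<close> by simp
  ultimately show "Re (F a) * (1 - r\<^sup>2) / 4 \<le> Re (F z)" "Re (F z) \<le> Re (F a) * (1 + r) / (1 - r)"
    using Re by (simp_all add: field_simps)
qed

section \<open>Estimates on a Carleson box\<close>

lemma norm_cis_diff_le: "norm (cis x - cis y) \<le> \<bar>x - y\<bar>"
proof -
  have "cis x - cis y = cis y * (cis (x - y) - 1)"
    by (simp add: algebra_simps cis_mult)
  then have "norm (cis x - cis y) = 2 * \<bar>sin ((x - y) / 2)\<bar>"
    using dist_exp_i_1[of "x - y"] by (simp add: norm_mult cis_conv_exp)
  also have "\<dots> \<le> \<bar>x - y\<bar>"
    using abs_sin_x_le_abs_x[of "(x - y) / 2"] by simp
  finally show ?thesis .
qed

lemma norm_one_minus_of_real [simp]: "norm (1 - of_real x :: 'a::real_normed_algebra_1) = \<bar>1 - x\<bar>"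
  by (metis norm_of_real of_real_1 of_real_diff)

lemma norm_one_minus_rcis_le:
  assumes "0 \<le> r" "r \<le> 1"
  shows "norm (1 - of_real r * cis s) \<le> (1 - r) + \<bar>s\<bar>"
proof -
  have "1 - of_real r * cis s = of_real (1 - r) + of_real r * (1 - cis s)"
    by (simp add: algebra_simps)
  then have "norm (1 - of_real r * cis s) \<le> norm (of_real (1 - r) :: complex) + norm (of_real r * (1 - cis s))"
    by (metis norm_triangle_ineq)
  also have "\<dots> = (1 - r) + r * norm (1 - cis s)"
    using assms by (simp add: norm_mult)
  also have "r * norm (1 - cis s) \<le> 1 * \<bar>s\<bar>"
    using assms norm_cis_diff_le[of 0 s] by (intro mult_mono) (auto simp: norm_minus_commute)
  finally show ?thesis
    by simp
qed

lemma nn_integral_one_minus_powr: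
  fixes h s :: real
  assumes h: "0 < h" and s: "0 < s" "s < 1"
  shows "(\<integral>\<^sup>+\<rho>. ennreal ((1 - \<rho>) powr (-s)) * indicator {1-h..<1} \<rho> \<partial>lborel) = ennreal (h powr (1 - s) / (1 - s))"
proof -
  have "((\<lambda>x. x powr (-s)) has_integral (h powr (-s + 1) / (-s + 1))) {0..h}"
    using s h by (intro has_integral_powr_from_0) auto
  then have "(\<integral>\<^sup>+x. ennreal (x powr (-s)) * indicator {0..h} x \<partial>lborel) = ennreal (h powr (1 - s) / (1 - s))"
    by (subst nn_integral_has_integral_lebesgue') simp_all
  moreover have "(\<integral>\<^sup>+\<rho>. ennreal ((1 - \<rho>) powr (-s)) * indicator {1-h..<1} \<rho> \<partial>lborel) =
      ennreal \<bar>-1\<bar> * (\<integral>\<^sup>+x. ennreal ((1 - (1 + -1 * x)) powr (-s)) * indicator {1-h..<1} (1 + -1 * x) \<partial>lborel)"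
    by (rule nn_integral_real_affine) auto
  moreover have "\<dots> = (\<integral>\<^sup>+x. ennreal (x powr (-s)) * indicator {0..h} x \<partial>lborel)"
    by (auto intro!: nn_integral_cong_AE eventually_mono[OF AE_lborel_singleton[of 0]] simp: indicator_def)
  ultimately show ?thesis
    by simp
qed

lemma nn_integral_id_Icc:
  fixes h :: real
  assumes "0 < h" "h \<le> 1"
  shows "(\<integral>\<^sup>+\<rho>. ennreal \<rho> * indicator {1-h..1} \<rho> \<partial>lborel) = ennreal ((1 - (1 - h)\<^sup>2) / 2)"
proof -
  have "((\<lambda>x. x) has_integral ((\<lambda>x. x\<^sup>2 / 2) 1 - (\<lambda>x. x\<^sup>2 / 2) (1 - h))) {1-h..1}"
    using assms by (intro fundamental_theorem_of_calculus)
      (auto intro!: derivative_eq_intros simp: has_real_derivative_iff_has_vector_derivative[symmetric])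
  then have "((\<lambda>x. x) has_integral ((1 - (1 - h)\<^sup>2) / 2)) {1-h..1}"
    by (simp add: diff_divide_distrib)
  then show ?thesis
    by (rule nn_integral_has_integral_lebesgue'[rotated]) (use assms in auto)
qed

lemma bekolle_bonami_product_le:
  fixes p u A B X Y c1 c2 :: real
  assumes p: "p > 1" and u: "u > 0" and B: "0 < B" "B \<le> A"
    and X: "0 \<le> X" "X \<le> c1 * B * u"
    and Y: "0 \<le> Y" "Y \<le> B * c2 / u powr (1 / (p - 1))" and "0 \<le> c2"
  shows "(X / A) * (Y / A) powr (p - 1) \<le> c1 * c2 powr (p - 1)"
proof -
  have "0 < A"
    using B by linarith
  have "X / A \<le> (c1 * B * u) / B"
    using X B \<open>0 < A\<close> by (intro frac_le) auto
  then have XA: "X / A \<le> c1 * u"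
    using B by simp
  moreover have "0 \<le> X / A"
    using X \<open>0 < A\<close> by simp
  ultimately have "0 \<le> c1 * u"
    by linarith
  have "Y / A \<le> (B * c2 / u powr (1 / (p - 1))) / B"
    using Y B \<open>0 < A\<close> \<open>0 \<le> c2\<close> by (intro frac_le) auto
  then have "(Y / A) powr (p - 1) \<le> (c2 / u powr (1 / (p - 1))) powr (p - 1)"
    using Y \<open>0 < A\<close> p B by (intro powr_mono2) auto
  also have "\<dots> = c2 powr (p - 1) / u"
    using u p by (simp add: powr_divide powr_powr)
  finally have "(X / A) * (Y / A) powr (p - 1) \<le> (c1 * u) * (c2 powr (p - 1) / u)"
    using XA \<open>0 \<le> c1 * u\<close> by (intro mult_mono) auto
  then show ?thesis
    using u by simp
qed

lemma set_integral_bounded_by_nn_integral: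
  fixes f g :: "'a \<Rightarrow> real"
  assumes [measurable]: "Q \<in> sets M" "g \<in> borel_measurable M"
    and eq: "\<And>z. z \<in> Q \<Longrightarrow> f z = g z" and nonneg: "\<And>z. z \<in> Q \<Longrightarrow> 0 \<le> g z"
    and bound: "(\<integral>\<^sup>+z. ennreal (g z) * indicator Q z \<partial>M) \<le> ennreal B" and "0 \<le> B"
  shows "set_integrable M Q f" "0 \<le> (LINT z:Q|M. f z)" "(LINT z:Q|M. f z) \<le> B"
proof -
  have fg: "(\<lambda>z. indicator Q z *\<^sub>R f z) = (\<lambda>z. indicator Q z *\<^sub>R g z)"
    using eq by (auto simp: fun_eq_iff indicator_def)
  have nn: "AE z in M. 0 \<le> indicator Q z *\<^sub>R g z"
    using nonneg by (auto simp: indicator_def)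
  have nn_eq: "(\<integral>\<^sup>+z. ennreal (indicator Q z *\<^sub>R g z) \<partial>M) = (\<integral>\<^sup>+z. ennreal (g z) * indicator Q z \<partial>M)"
    by (intro nn_integral_cong) (auto simp: indicator_def)
  have "(\<integral>\<^sup>+z. ennreal (indicator Q z *\<^sub>R g z) \<partial>M) < \<infinity>"
    unfolding nn_eq using bound by (auto intro: le_less_trans)
  then have "integrable M (\<lambda>z. indicator Q z *\<^sub>R g z)"
    by (intro integrableI_nonneg nn) simp
  then show "set_integrable M Q f"
    unfolding set_integrable_def fg .
  have L: "(LINT z:Q|M. f z) = enn2real (\<integral>\<^sup>+z. ennreal (indicator Q z *\<^sub>R g z) \<partial>M)"
    unfolding set_lebesgue_integral_def fg by (rule integral_eq_nn_integral[OF _ nn]) simp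
  show "0 \<le> (LINT z:Q|M. f z)"
    unfolding L by simp
  show "(LINT z:Q|M. f z) \<le> B"
    unfolding L nn_eq using bound \<open>0 \<le> B\<close> by (intro enn2real_leI)
qed

text \<open>\<open>h\<close> is the normalized length \<open>|I|\<close> of the arc \<open>I = circ_arc \<alpha> l\<close>, \<open>m\<close> its midpoint and
  \<open>a = (1 - |I|) e\<^sup>i\<^sup>m\<close> the midpoint of the inner edge of \<open>Q(I)\<close>.\<close>

locale carleson_arc =
  fixes \<alpha> l :: real
  assumes arc_length: "0 < l" "l \<le> 2*pi"
begin

definition "h = l / (2*pi)"
definition "m = \<alpha> + l / 2"
definition "a = of_real (1 - h) * cis m"

lemma h_pos: "0 < h" and h_le_1: "h \<le> 1"
  using arc_length unfolding h_def by (auto simp: field_simps)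

lemma norm_a: "norm a = 1 - h"
  unfolding a_def using h_le_1 by (simp add: norm_mult)

lemma norm_a_lt_1: "norm a < 1"
  using norm_a h_pos by simp

lemma h_le_one_minus_norm_a_squared: "h \<le> 1 - (norm a)\<^sup>2"
  unfolding norm_a using h_pos h_le_1 by (simp add: power2_eq_square algebra_simps)

lemma dist_midpoint_le:
  assumes "\<theta> \<in> {\<alpha>..\<alpha>+l}"
  shows "\<bar>\<theta> - m\<bar> \<le> pi * h"
proof -
  have "\<bar>\<theta> - m\<bar> \<le> l / 2"
    using assms unfolding m_def abs_le_iff by auto
  also have "l / 2 = pi * h"
    unfolding h_def by simp
  finally show ?thesis .
qed

lemma norm_one_minus_cnj_a_le:
  assumes \<theta>: "\<theta> \<in> {\<alpha>..\<alpha>+l}" and \<rho>: "1 - h \<le> \<rho>" "\<rho> \<le> 1"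
  shows "norm (1 - cnj a * (of_real \<rho> * cis \<theta>)) \<le> 6 * h"
proof -
  have "cis (-m) * cis \<theta> = cis (\<theta> - m)"
    by (simp add: cis_mult)
  then have rot: "cnj a * (of_real \<rho> * cis \<theta>) = of_real ((1 - h) * \<rho>) * cis (\<theta> - m)"
    unfolding a_def by (simp add: cis_cnj mult_ac)
  have "0 \<le> (1 - h) * \<rho>" "(1 - h) * \<rho> \<le> 1"
    using h_le_1 \<rho> by (auto simp: mult_le_one)
  then have "norm (1 - cnj a * (of_real \<rho> * cis \<theta>)) \<le> (1 - (1 - h) * \<rho>) + \<bar>\<theta> - m\<bar>"
    unfolding rot by (rule norm_one_minus_rcis_le)
  also have "1 - (1 - h) * \<rho> \<le> 2 * h"
  proof -
    have "(1 - h) * (1 - h) \<le> (1 - h) * \<rho>"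
      using h_le_1 \<rho> by (intro mult_left_mono) auto
    then have "1 - (1 - h) * \<rho> \<le> 2 * h - h * h"
      by (simp add: algebra_simps)
    then show ?thesis
      using zero_le_square[of h] by linarith
  qed
  also have "\<bar>\<theta> - m\<bar> \<le> pi * h"
    by (rule dist_midpoint_le[OF \<theta>])
  also have "2 * h + pi * h \<le> 6 * h"
    using pi_less_4 h_pos by (simp add: algebra_simps)
  finally show ?thesis
    by simp
qed

lemma poisson_kernel_a_lower_bound:
  assumes "\<theta> \<in> {\<alpha>..\<alpha>+l}"
  shows "1 \<le> 25 * h * poisson_kernel a \<theta>"
proof -
  have "cis m - a = of_real h * cis m"
    unfolding a_def by (simp add: algebra_simps)
  then have "norm (cis m - a) = h"
    using h_pos by (simp add: norm_mult)
  moreover have "norm (cis \<theta> - cis m) \<le> pi * h"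
    using norm_cis_diff_le[of \<theta> m] dist_midpoint_le[OF assms] by simp
  moreover have "pi * h \<le> 4 * h"
    using pi_less_4 h_pos by (intro mult_right_mono) auto
  ultimately have "norm (cis \<theta> - a) \<le> 5 * h"
    using norm_triangle_ineq[of "cis \<theta> - cis m" "cis m - a"] by simp
  moreover have "cis \<theta> \<noteq> a"
    using norm_a_lt_1 by (metis norm_cis less_irrefl)
  then have "norm (cis \<theta> - a) > 0"
    by simp
  ultimately have "(norm (cis \<theta> - a))\<^sup>2 \<le> 25 * h * h"
    using power_mono[of "norm (cis \<theta> - a)" "5 * h" 2] by (simp add: power2_eq_square)
  also have "25 * h * h \<le> 25 * h * (1 - (norm a)\<^sup>2)"
    using h_le_one_minus_norm_a_squared h_pos by (intro mult_left_mono) auto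
  finally show ?thesis
    unfolding poisson_kernel_def using \<open>norm (cis \<theta> - a) > 0\<close> by (simp add: field_simps)
qed

lemma norm_Moebius_radial_le_half:
  assumes \<rho>: "1 - h \<le> \<rho>" "\<rho> < 1"
  shows "norm (Moebius_function 0 a (of_real \<rho> * a)) \<le> 1/2"
proof -
  have "cnj a * a = of_real ((1 - h)\<^sup>2)"
    using norm_a complex_norm_square[of a] by (simp add: mult.commute)
  then have "1 - cnj a * (of_real \<rho> * a) = of_real (1 - \<rho> * (1 - h)\<^sup>2)"
    by (simp add: algebra_simps)
  moreover have "of_real \<rho> * a - a = of_real (\<rho> - 1) * a"
    by (simp add: algebra_simps)
  ultimately have "Moebius_function 0 a (of_real \<rho> * a) = of_real (\<rho> - 1) * a / of_real (1 - \<rho> * (1 - h)\<^sup>2)"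
    unfolding Moebius_function_simple by simp
  moreover have "\<rho> * (1 - h)\<^sup>2 < 1 * 1"
    using \<rho> h_pos h_le_1 by (intro mult_strict_mono') (auto simp: power_le_one power_less_one_iff)
  ultimately have "norm (Moebius_function 0 a (of_real \<rho> * a)) = (1 - \<rho>) * (1 - h) / (1 - \<rho> * (1 - h)\<^sup>2)"
    using \<rho> norm_a by (simp only: norm_divide norm_mult norm_of_real) simp
  also have "\<dots> \<le> 1/2"
  proof -
    have "(1 - h) * ((1 - h) * (1 + h)) \<le> \<rho> * ((1 - h) * (1 + h))"
      using \<rho> h_le_1 h_pos by (intro mult_right_mono) auto
    moreover have "0 \<le> h * (1 - h + h * h)"
      using h_pos h_le_1 by (intro mult_nonneg_nonneg) auto
    ultimately have "2 * ((1 - \<rho>) * (1 - h)) \<le> 1 - \<rho> * (1 - h)\<^sup>2"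
      by (simp add: power2_eq_square algebra_simps)
    then show ?thesis
      using \<open>\<rho> * (1 - h)\<^sup>2 < 1 * 1\<close> by (simp add: field_simps)
  qed
  finally show ?thesis .
qed

end

locale carleson_arc_positive = carleson_arc +
  fixes F :: "complex \<Rightarrow> complex"
  assumes holo: "F holomorphic_on ball 0 1" and Re_pos: "\<And>z. z \<in> ball 0 1 \<Longrightarrow> Re (F z) > 0"
begin

definition "U z = Re (F z)"

definition "U0 z = indicator (ball 0 1) z *\<^sub>R U z"

lemma U_pos: "z \<in> ball 0 1 \<Longrightarrow> U z > 0"
  unfolding U_def using Re_pos by simp

lemma U_a_pos: "U a > 0"
  using U_pos norm_a_lt_1 by simp

lemma U0_eq: "z \<in> ball 0 1 \<Longrightarrow> U0 z = U z"
  unfolding U0_def by simp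

lemma borel_measurable_U0 [measurable]: "U0 \<in> borel_measurable borel"
proof -
  have "continuous_on (ball 0 1) U"
    unfolding U_def using holomorphic_on_imp_continuous_on[OF holo] by (intro continuous_intros)
  then show ?thesis
    unfolding U0_def by (intro borel_measurable_continuous_on_indicator) auto
qed

lemma polar_in_ball: "0 \<le> \<rho> \<Longrightarrow> \<rho> < 1 \<Longrightarrow> of_real \<rho> * cis \<theta> \<in> ball 0 1"
  by (simp add: norm_mult)

lemma U0_polar: "0 \<le> \<rho> \<Longrightarrow> \<rho> < 1 \<Longrightarrow> U0 (of_real \<rho> * cis \<theta>) = U (of_real \<rho> * cis \<theta>)"
  using U0_eq polar_in_ball by blast

lemma U_lower_bound:
  assumes \<theta>: "\<theta> \<in> {\<alpha>..\<alpha>+l}" and \<rho>: "1 - h \<le> \<rho>" "\<rho> < 1"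
  shows "U a * (1 - \<rho>) / (144 * h) \<le> U (of_real \<rho> * cis \<theta>)"
proof -
  define z where "z = of_real \<rho> * cis \<theta>"
  have "0 \<le> \<rho>"
    using \<rho> h_le_1 by simp
  then have nz: "norm z = \<rho>" and z: "norm z < 1"
    unfolding z_def using \<rho> by (simp_all add: norm_mult)
  define q where "q = (1 - (norm a)\<^sup>2) / (norm (1 - cnj a * z))\<^sup>2"
  have "norm (1 - cnj a * z) > 0"
    using Moebius_denominator_nonzero[OF norm_a_lt_1 z] by simp
  moreover have "norm (1 - cnj a * z) \<le> 6 * h"
    unfolding z_def using \<theta> \<rho> by (intro norm_one_minus_cnj_a_le) auto
  ultimately have "(norm (1 - cnj a * z))\<^sup>2 \<le> 36 * h\<^sup>2"
    using power_mono[of "norm (1 - cnj a * z)" "6 * h" 2] by (simp add: power2_eq_square)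
  then have "h / (36 * h\<^sup>2) \<le> q"
    unfolding q_def using h_le_one_minus_norm_a_squared h_pos \<open>norm (1 - cnj a * z) > 0\<close>
    by (intro frac_le) auto
  moreover have "h / (36 * h\<^sup>2) = 1 / (36 * h)"
    using h_pos by (simp add: power2_eq_square)
  moreover have "1 - \<rho> \<le> 1 - (norm z)\<^sup>2"
    using nz \<rho> \<open>0 \<le> \<rho>\<close> by (simp add: power2_eq_square mult_left_le_one_le)
  moreover have "0 \<le> q"
    unfolding q_def using h_le_one_minus_norm_a_squared h_pos by simp
  ultimately have "(1 / (36 * h)) * (1 - \<rho>) \<le> q * (1 - (norm z)\<^sup>2)"
    using \<rho> by (intro mult_mono) auto
  also have "\<dots> = 1 - (norm (Moebius_function 0 a z))\<^sup>2"
    unfolding q_def by (rule one_minus_norm_Moebius_squared[OF norm_a_lt_1 z, symmetric])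
  finally have key: "(1 / (36 * h)) * (1 - \<rho>) \<le> 1 - (norm (Moebius_function 0 a z))\<^sup>2" .
  have "U a * (1 - \<rho>) / (144 * h) = U a * ((1 / (36 * h)) * (1 - \<rho>)) / 4"
    by simp
  also have "\<dots> \<le> U a * (1 - (norm (Moebius_function 0 a z))\<^sup>2) / 4"
    using key U_a_pos by (intro divide_right_mono mult_left_mono) auto
  also have "\<dots> \<le> U z"
    unfolding U_def using Harnack_half_plane(1)[OF holo Re_pos norm_a_lt_1 z] .
  finally show ?thesis
    unfolding z_def .
qed

lemma U_radial_upper_bound:
  assumes \<rho>: "1 - h \<le> \<rho>" "\<rho> < 1"
  shows "U (of_real \<rho> * a) \<le> 3 * U a"
proof -
  have "0 \<le> \<rho>"
    using \<rho> h_le_1 by simp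
  then have z: "norm (of_real \<rho> * a) < 1"
    using \<rho> norm_a_lt_1 mult_strict_mono'[of \<rho> 1 "norm a" 1] by (simp add: norm_mult)
  define t where "t = norm (Moebius_function 0 a (of_real \<rho> * a))"
  have "t \<le> 1/2"
    unfolding t_def using norm_Moebius_radial_le_half[OF \<rho>] .
  then have "U a * (1 + t) / (1 - t) \<le> U a * 3"
    using U_a_pos by (simp add: field_simps t_def)
  then show ?thesis
    using Harnack_half_plane(2)[OF holo Re_pos norm_a_lt_1 z] unfolding U_def t_def by simp
qed

lemma nn_integral_box:
  assumes "g \<in> borel_measurable borel"
  shows "(\<integral>\<^sup>+z. g z * indicator (carleson_box \<alpha> l) z \<partial>lborel) =
    (\<integral>\<^sup>+\<theta>. indicator {\<alpha>..\<alpha>+l} \<theta> *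
       (\<integral>\<^sup>+\<rho>. indicator {0<..<1} \<rho> * indicator {1 - h..} \<rho> * ennreal \<rho> * g (of_real \<rho> * cis \<theta>) \<partial>lborel) \<partial>lborel)"
  using nn_integral_carleson_box_polar[OF assms arc_length(2)] unfolding h_def .

text \<open>On the arc the Poisson kernel of \<open>a\<close> is at least \<open>1/(25 h)\<close>, so the mean of \<open>U\<close> over the arc
  at radius \<open>\<rho>\<close> is controlled by \<open>U(\<rho> a)\<close>, hence by \<open>U a\<close>.\<close>

lemma nn_integral_arc_U_le:
  assumes \<rho>: "1 - h \<le> \<rho>" "\<rho> < 1" "0 < \<rho>"
  shows "(\<integral>\<^sup>+\<theta>. indicator {\<alpha>..\<alpha>+l} \<theta> * ennreal (U (of_real \<rho> * cis \<theta>)) \<partial>lborel) \<le> ennreal (150 * pi * h * U a)"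
proof -
  define P where "P \<theta> = poisson_kernel a \<theta> * U (of_real \<rho> * cis \<theta>)" for \<theta>
  have P_eq: "P \<theta> = poisson_kernel a \<theta> * U0 (of_real \<rho> * cis \<theta>)" for \<theta>
    unfolding P_def using U0_polar \<rho> by simp
  have [measurable]: "P \<in> borel_measurable borel"
    unfolding P_eq[abs_def] poisson_kernel_def by measurable
  have "(\<integral>\<^sup>+\<theta>. indicator {\<alpha>..\<alpha>+l} \<theta> * ennreal (U (of_real \<rho> * cis \<theta>)) \<partial>lborel) \<le>
        (\<integral>\<^sup>+\<theta>. ennreal (25 * h) * (ennreal (P \<theta>) * indicator {\<alpha>..<\<alpha>+2*pi} \<theta>) \<partial>lborel)"
  proof (intro nn_integral_mono_AE eventually_mono[OF AE_lborel_singleton[of "\<alpha>+2*pi"]])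
    fix \<theta> :: real assume "\<theta> \<noteq> \<alpha> + 2*pi"
    show "indicator {\<alpha>..\<alpha>+l} \<theta> * ennreal (U (of_real \<rho> * cis \<theta>)) \<le>
        ennreal (25 * h) * (ennreal (P \<theta>) * indicator {\<alpha>..<\<alpha>+2*pi} \<theta>)"
    proof (cases "\<theta> \<in> {\<alpha>..\<alpha>+l}")
      case True
      then have "\<theta> \<in> {\<alpha>..<\<alpha>+2*pi}"
        using \<open>\<theta> \<noteq> \<alpha> + 2*pi\<close> arc_length by auto
      have "0 < U (of_real \<rho> * cis \<theta>)"
        using U_pos polar_in_ball \<rho> by simp
      then have "1 * U (of_real \<rho> * cis \<theta>) \<le> (25 * h * poisson_kernel a \<theta>) * U (of_real \<rho> * cis \<theta>)"
        using poisson_kernel_a_lower_bound[OF True] by (intro mult_right_mono) auto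
      then have "U (of_real \<rho> * cis \<theta>) \<le> 25 * h * P \<theta>"
        unfolding P_def by (simp add: mult.assoc)
      then have "ennreal (U (of_real \<rho> * cis \<theta>)) \<le> ennreal (25 * h) * ennreal (P \<theta>)"
        using h_pos by (simp add: ennreal_mult'[symmetric] ennreal_leI)
      then show ?thesis
        using True \<open>\<theta> \<in> {\<alpha>..<\<alpha>+2*pi}\<close> by simp
    qed simp
  qed
  also have "\<dots> = ennreal (25 * h) * (\<integral>\<^sup>+\<theta>. ennreal (P \<theta>) * indicator {\<alpha>..<\<alpha>+2*pi} \<theta> \<partial>lborel)"
    by (rule nn_integral_cmult) simp
  also have "(\<integral>\<^sup>+\<theta>. ennreal (P \<theta>) * indicator {\<alpha>..<\<alpha>+2*pi} \<theta> \<partial>lborel) = ennreal (2*pi * U (of_real \<rho> * a))"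
    unfolding P_def U_def using nn_integral_poisson_Re[OF holo _ \<rho>(3,2) norm_a_lt_1] Re_pos
    by (simp add: less_imp_le)
  also have "ennreal (25 * h) * ennreal (2*pi * U (of_real \<rho> * a)) \<le> ennreal (25 * h) * ennreal (2*pi * (3 * U a))"
    using U_radial_upper_bound[OF \<rho>(1,2)] by (intro mult_left_mono ennreal_leI) auto
  also have "\<dots> = ennreal (150 * pi * h * U a)"
    using h_pos by (simp add: ennreal_mult'[symmetric] algebra_simps)
  finally show ?thesis .
qed

lemma nn_integral_box_le_iterated:
  assumes [measurable]: "g \<in> borel_measurable borel"
  shows "(\<integral>\<^sup>+z. g z * indicator (carleson_box \<alpha> l) z \<partial>lborel) \<le>
    (\<integral>\<^sup>+\<rho>. \<integral>\<^sup>+\<theta>. indicator {\<alpha>..\<alpha>+l} \<theta> * (indicator {0<..<1} \<rho> * indicator {1-h..} \<rho> *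
       g (of_real \<rho> * cis \<theta>)) \<partial>lborel \<partial>lborel)"
  (is "_ \<le> (\<integral>\<^sup>+\<rho>. \<integral>\<^sup>+\<theta>. ?G \<theta> \<rho> \<partial>lborel \<partial>lborel)")
proof -
  have "(\<integral>\<^sup>+z. g z * indicator (carleson_box \<alpha> l) z \<partial>lborel) =
      (\<integral>\<^sup>+\<theta>. \<integral>\<^sup>+\<rho>. indicator {\<alpha>..\<alpha>+l} \<theta> *
         (indicator {0<..<1} \<rho> * indicator {1 - h..} \<rho> * ennreal \<rho> * g (of_real \<rho> * cis \<theta>)) \<partial>lborel \<partial>lborel)"
    unfolding nn_integral_box[OF assms] by (intro nn_integral_cong nn_integral_cmult[symmetric]) simp
  also have "\<dots> \<le> (\<integral>\<^sup>+\<theta>. \<integral>\<^sup>+\<rho>. ?G \<theta> \<rho> \<partial>lborel \<partial>lborel)"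
  proof (intro nn_integral_mono)
    fix \<theta> \<rho> :: real
    have "indicator {0<..<1} \<rho> * ennreal \<rho> * g (of_real \<rho> * cis \<theta>) \<le> indicator {0<..<1} \<rho> * g (of_real \<rho> * cis \<theta>)"
    proof (cases "\<rho> \<in> {0<..<1}")
      case True
      then have "ennreal \<rho> * g (of_real \<rho> * cis \<theta>) \<le> 1 * g (of_real \<rho> * cis \<theta>)"
        by (intro mult_right_mono) auto
      then show ?thesis
        using True by simp
    qed simp
    then have "indicator {1-h..} \<rho> * (indicator {0<..<1} \<rho> * ennreal \<rho> * g (of_real \<rho> * cis \<theta>))
        \<le> indicator {1-h..} \<rho> * (indicator {0<..<1} \<rho> * g (of_real \<rho> * cis \<theta>))"
      by (rule mult_left_mono) simp
    then show "indicator {\<alpha>..\<alpha>+l} \<theta> *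
        (indicator {0<..<1} \<rho> * indicator {1 - h..} \<rho> * ennreal \<rho> * g (of_real \<rho> * cis \<theta>)) \<le> ?G \<theta> \<rho>"
      by (intro mult_left_mono) (simp_all add: mult_ac)
  qed
  also have "\<dots> = (\<integral>\<^sup>+\<rho>. \<integral>\<^sup>+\<theta>. ?G \<theta> \<rho> \<partial>lborel \<partial>lborel)"
    by (rule lborel_pair.Fubini'[symmetric]) simp
  finally show ?thesis .
qed

lemma nn_integral_box_U_le:
  "(\<integral>\<^sup>+z. ennreal (U0 z) * indicator (carleson_box \<alpha> l) z \<partial>lborel) \<le> ennreal (150 * (pi * h\<^sup>2) * U a)"
proof -
  have "(\<integral>\<^sup>+z. ennreal (U0 z) * indicator (carleson_box \<alpha> l) z \<partial>lborel) \<le>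
    (\<integral>\<^sup>+\<rho>. \<integral>\<^sup>+\<theta>. indicator {\<alpha>..\<alpha>+l} \<theta> * (indicator {0<..<1} \<rho> * indicator {1-h..} \<rho> *
       ennreal (U0 (of_real \<rho> * cis \<theta>))) \<partial>lborel \<partial>lborel)"
    by (rule nn_integral_box_le_iterated) simp
  also have "\<dots> \<le> (\<integral>\<^sup>+\<rho>. ennreal (150 * pi * h * U a) * indicator {1-h..1} \<rho> \<partial>lborel)"
  proof (intro nn_integral_mono)
    fix \<rho> :: real
    show "(\<integral>\<^sup>+\<theta>. indicator {\<alpha>..\<alpha>+l} \<theta> * (indicator {0<..<1} \<rho> * indicator {1-h..} \<rho> *
        ennreal (U0 (of_real \<rho> * cis \<theta>))) \<partial>lborel) \<le> ennreal (150 * pi * h * U a) * indicator {1-h..1} \<rho>"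
    proof (cases "\<rho> \<in> {0<..<1} \<and> 1 - h \<le> \<rho>")
      case True
      then have "(\<integral>\<^sup>+\<theta>. indicator {\<alpha>..\<alpha>+l} \<theta> * (indicator {0<..<1} \<rho> * indicator {1-h..} \<rho> *
          ennreal (U0 (of_real \<rho> * cis \<theta>))) \<partial>lborel)
          = (\<integral>\<^sup>+\<theta>. indicator {\<alpha>..\<alpha>+l} \<theta> * ennreal (U (of_real \<rho> * cis \<theta>)) \<partial>lborel)"
        by (intro nn_integral_cong) (simp add: U0_polar)
      also have "\<dots> \<le> ennreal (150 * pi * h * U a)"
        using True by (intro nn_integral_arc_U_le) auto
      finally show ?thesis
        using True by simp
    qed (auto simp: indicator_def)
  qed
  also have "\<dots> = ennreal (150 * pi * h * U a) * ennreal h"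
    using h_pos by (simp add: nn_integral_cmult_indicator)
  also have "\<dots> = ennreal (150 * (pi * h\<^sup>2) * U a)"
    using h_pos U_a_pos by (simp add: ennreal_mult'[symmetric] power2_eq_square mult_ac)
  finally show ?thesis .
qed

lemma U_powr_polar_le:
  assumes \<theta>: "\<theta> \<in> {\<alpha>..\<alpha>+l}" and \<rho>: "1 - h \<le> \<rho>" "\<rho> < 1" and "0 < s"
  shows "U (of_real \<rho> * cis \<theta>) powr (-s) \<le> (U a / (144 * h)) powr (-s) * (1 - \<rho>) powr (-s)"
proof -
  have "0 < U a * (1 - \<rho>) / (144 * h)"
    using U_a_pos \<rho> h_pos by simp
  then have "U (of_real \<rho> * cis \<theta>) powr (-s) \<le> (U a * (1 - \<rho>) / (144 * h)) powr (-s)"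
    using U_lower_bound[OF \<theta> \<rho>] \<open>0 < s\<close> by (intro powr_mono2') auto
  also have "\<dots> = (U a / (144 * h)) powr (-s) * (1 - \<rho>) powr (-s)"
    using U_a_pos h_pos \<rho> by (simp add: powr_mult[symmetric])
  finally show ?thesis .
qed

lemma nn_integral_radial_U0_powr_le:
  assumes \<theta>: "\<theta> \<in> {\<alpha>..\<alpha>+l}" and s: "0 < s" "s < 1"
  shows "(\<integral>\<^sup>+\<rho>. indicator {0<..<1} \<rho> * indicator {1 - h..} \<rho> * ennreal \<rho> * ennreal (U0 (of_real \<rho> * cis \<theta>) powr (-s)) \<partial>lborel)
    \<le> ennreal (144 powr s * h / ((1 - s) * U a powr s))"
proof -
  define K where "K = (U a / (144 * h)) powr (-s)"
  have "0 \<le> K"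
    unfolding K_def by simp
  have "(\<integral>\<^sup>+\<rho>. indicator {0<..<1} \<rho> * indicator {1 - h..} \<rho> * ennreal \<rho> * ennreal (U0 (of_real \<rho> * cis \<theta>) powr (-s)) \<partial>lborel)
      \<le> (\<integral>\<^sup>+\<rho>. ennreal K * (ennreal ((1 - \<rho>) powr (-s)) * indicator {1-h..<1} \<rho>) \<partial>lborel)"
  proof (intro nn_integral_mono)
    fix \<rho> :: real
    show "indicator {0<..<1} \<rho> * indicator {1 - h..} \<rho> * ennreal \<rho> * ennreal (U0 (of_real \<rho> * cis \<theta>) powr (-s))
        \<le> ennreal K * (ennreal ((1 - \<rho>) powr (-s)) * indicator {1-h..<1} \<rho>)"
    proof (cases "\<rho> \<in> {0<..<1} \<and> 1 - h \<le> \<rho>")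
      case True
      then have "\<rho> * U0 (of_real \<rho> * cis \<theta>) powr (-s) \<le> 1 * (K * (1 - \<rho>) powr (-s))"
        using U_powr_polar_le[OF \<theta> _ _ s(1)] \<open>0 \<le> K\<close> unfolding K_def
        by (intro mult_mono) (auto simp: U0_polar)
      then have "ennreal \<rho> * ennreal (U0 (of_real \<rho> * cis \<theta>) powr (-s)) \<le> ennreal K * ennreal ((1 - \<rho>) powr (-s))"
        using True \<open>0 \<le> K\<close> by (simp add: ennreal_mult'[symmetric] ennreal_leI)
      then show ?thesis
        using True by (simp add: indicator_def mult.assoc)
    qed (auto simp: indicator_def)
  qed
  also have "\<dots> = ennreal K * (\<integral>\<^sup>+\<rho>. ennreal ((1 - \<rho>) powr (-s)) * indicator {1-h..<1} \<rho> \<partial>lborel)"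
    by (rule nn_integral_cmult) simp
  also have "\<dots> = ennreal K * ennreal (h powr (1 - s) / (1 - s))"
    using nn_integral_one_minus_powr[OF h_pos s] by simp
  also have "\<dots> = ennreal (K * (h powr (1 - s) / (1 - s)))"
    using \<open>0 \<le> K\<close> by (rule ennreal_mult'[symmetric])
  also have "K * (h powr (1 - s) / (1 - s)) = 144 powr s * (h powr s * h powr (1 - s)) / ((1 - s) * U a powr s)"
    unfolding K_def using U_a_pos h_pos by (simp add: powr_minus powr_divide powr_mult field_simps)
  also have "h powr s * h powr (1 - s) = h"
    using h_pos by (simp add: powr_add[symmetric])
  finally show ?thesis .
qed

lemma nn_integral_box_U_powr_le:
  assumes s: "0 < s" "s < 1"
  shows "(\<integral>\<^sup>+z. ennreal (U0 z powr (-s)) * indicator (carleson_box \<alpha> l) z \<partial>lborel) \<le>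
    ennreal (pi * h\<^sup>2 * (2 * 144 powr s / (1 - s)) / U a powr s)"
proof -
  define C where "C = 144 powr s * h / ((1 - s) * U a powr s)"
  have "0 \<le> C"
    unfolding C_def using s h_pos by simp
  have "(\<integral>\<^sup>+z. ennreal (U0 z powr (-s)) * indicator (carleson_box \<alpha> l) z \<partial>lborel) =
      (\<integral>\<^sup>+\<theta>. indicator {\<alpha>..\<alpha>+l} \<theta> *
         (\<integral>\<^sup>+\<rho>. indicator {0<..<1} \<rho> * indicator {1 - h..} \<rho> * ennreal \<rho> * ennreal (U0 (of_real \<rho> * cis \<theta>) powr (-s)) \<partial>lborel) \<partial>lborel)"
    by (rule nn_integral_box) simp
  also have "\<dots> \<le> (\<integral>\<^sup>+\<theta>. ennreal C * indicator {\<alpha>..\<alpha>+l} \<theta> \<partial>lborel)"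
    using nn_integral_radial_U0_powr_le[OF _ s] unfolding C_def
    by (intro nn_integral_mono) (auto simp: indicator_def)
  also have "\<dots> = ennreal C * ennreal l"
    using arc_length by (simp add: nn_integral_cmult_indicator)
  also have "\<dots> = ennreal (l * C)"
    using \<open>0 \<le> C\<close> by (subst ennreal_mult'[symmetric]) (simp_all add: mult.commute)
  also have "l * C = pi * h\<^sup>2 * (2 * 144 powr s / (1 - s)) / U a powr s"
    unfolding C_def h_def using s by (simp add: power2_eq_square field_simps)
  finally show ?thesis .
qed

lemma emeasure_carleson_box: "emeasure lborel (carleson_box \<alpha> l) = ennreal (pi * h\<^sup>2 * (2 - h))"
proof -
  have "emeasure lborel (carleson_box \<alpha> l) = (\<integral>\<^sup>+z. 1 * indicator (carleson_box \<alpha> l) z \<partial>lborel)"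
    by simp
  also have "\<dots> = (\<integral>\<^sup>+\<theta>. indicator {\<alpha>..\<alpha>+l} \<theta> *
      (\<integral>\<^sup>+\<rho>. indicator {0<..<1} \<rho> * indicator {1 - h..} \<rho> * ennreal \<rho> * 1 \<partial>lborel) \<partial>lborel)"
    by (rule nn_integral_box) simp
  also have "(\<integral>\<^sup>+\<rho>. indicator {0<..<1} \<rho> * indicator {1 - h..} \<rho> * ennreal \<rho> * 1 \<partial>lborel) =
      (\<integral>\<^sup>+\<rho>. ennreal \<rho> * indicator {1-h..1} \<rho> \<partial>lborel)"
    using h_pos h_le_1
    by (intro nn_integral_cong_AE eventually_mono[OF AE_lborel_singleton[of 1]]) (auto simp: indicator_def)
  also have "\<dots> = ennreal ((1 - (1 - h)\<^sup>2) / 2)"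
    by (rule nn_integral_id_Icc[OF h_pos h_le_1])
  also have "(\<integral>\<^sup>+\<theta>. indicator {\<alpha>..\<alpha>+l} \<theta> * ennreal ((1 - (1 - h)\<^sup>2) / 2) \<partial>lborel) =
      ennreal ((1 - (1 - h)\<^sup>2) / 2) * ennreal l"
    using arc_length by (subst mult.commute) (simp add: nn_integral_cmult_indicator)
  also have "\<dots> = ennreal (l * ((1 - (1 - h)\<^sup>2) / 2))"
    using h_pos h_le_1 by (subst ennreal_mult'[symmetric]) (simp_all add: power_le_one mult.commute)
  also have "l * ((1 - (1 - h)\<^sup>2) / 2) = pi * h\<^sup>2 * (2 - h)"
    unfolding h_def by (simp add: power2_eq_square field_simps)
  finally show ?thesis .
qed

lemma carleson_box_bekolle_bonami_bound:
  fixes u :: "complex \<Rightarrow> real"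
  assumes u: "\<And>z. z \<in> ball 0 1 \<Longrightarrow> u z = U z" and p: "p > 2"
  defines "Q \<equiv> carleson_box \<alpha> l"
  shows "set_integrable lborel Q u \<and> set_integrable lborel Q (\<lambda>z. u z powr (- 1 / (p - 1))) \<and>
    avgA Q u * (avgA Q (\<lambda>z. u z powr (- 1 / (p - 1)))) powr (p - 1)
      \<le> 150 * (2 * 144 powr (1 / (p - 1)) / (1 - 1 / (p - 1))) powr (p - 1)"
proof -
  have s: "0 < 1 / (p - 1)" "1 / (p - 1) < 1"
    using p by (simp_all add: divide_less_eq)
  have Q_borel: "Q \<in> sets lborel"
    unfolding Q_def by simp
  have u_Q: "u z = U0 z" "0 \<le> U0 z" if "z \<in> Q" for z
    using that carleson_box_subset_ball u U0_eq U_pos unfolding Q_def by (force simp: less_imp_le)+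
  have int_u: "set_integrable lborel Q u" "0 \<le> (LINT z:Q|lborel. u z)"
    "(LINT z:Q|lborel. u z) \<le> 150 * (pi * h\<^sup>2) * U a"
    using set_integral_bounded_by_nn_integral[where Q=Q and M=lborel and g=U0 and f=u,
        OF Q_borel _ u_Q nn_integral_box_U_le[folded Q_def]] U_a_pos
    by simp_all
  have int_v: "set_integrable lborel Q (\<lambda>z. u z powr (- 1 / (p - 1)))"
    "0 \<le> (LINT z:Q|lborel. u z powr (- 1 / (p - 1)))"
    "(LINT z:Q|lborel. u z powr (- 1 / (p - 1)))
      \<le> pi * h\<^sup>2 * (2 * 144 powr (1 / (p - 1)) / (1 - 1 / (p - 1))) / U a powr (1 / (p - 1))"
    using set_integral_bounded_by_nn_integral[where Q=Q and M=lborel and g="\<lambda>z. U0 z powr (- (1 / (p - 1)))"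
        and f="\<lambda>z. u z powr (- 1 / (p - 1))", OF Q_borel _ _ _ nn_integral_box_U_powr_le[OF s, folded Q_def]]
      u_Q s U_a_pos
    by simp_all
  have "measure lborel Q = pi * h\<^sup>2 * (2 - h)"
    using emeasure_carleson_box h_pos h_le_1 unfolding Q_def measure_def by simp
  then have avg: "avgA Q f = (LINT z:Q|lborel. f z) / (pi * h\<^sup>2 * (2 - h))" for f
    unfolding avgA_def areaA_def by simp
  have "pi * h\<^sup>2 \<le> pi * h\<^sup>2 * (2 - h)"
    using h_le_1 mult_left_mono[of 1 "2 - h" "pi * h\<^sup>2"] by simp
  from bekolle_bonami_product_le[OF _ U_a_pos _ this int_u(2,3) int_v(2,3)] p h_pos s
  have "avgA Q u * (avgA Q (\<lambda>z. u z powr (- 1 / (p - 1)))) powr (p - 1)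
      \<le> 150 * (2 * 144 powr (1 / (p - 1)) / (1 - 1 / (p - 1))) powr (p - 1)"
    unfolding avg by simp
  with int_u(1) int_v(1) show ?thesis
    by blast
qed

end

theorem mainTheorem14:
  fixes u :: "complex \<Rightarrow> real"
  assumes "harmonic_on (ball 0 1) u"
    and "\<forall>z\<in>ball 0 1. u z > 0"
  shows "\<forall>p::real. p > 2 \<longrightarrow> bekolle_bonami p u"
proof (intro allI impI)
  fix p :: real assume "p > 2"
  obtain F where holo: "F holomorphic_on ball 0 1" and Re_F: "\<And>z. z \<in> ball 0 1 \<Longrightarrow> Re (F z) = u z"
    using harmonic_on_convex_Re_holomorphic[OF assms(1) convex_ball] by blast
  show "bekolle_bonami p u"
    unfolding bekolle_bonami_def
  proof (intro exI[of _ "150 * (2 * 144 powr (1 / (p - 1)) / (1 - 1 / (p - 1))) powr (p - 1)"] allI impI)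
    fix Q assume "is_carleson_box Q"
    then obtain \<alpha> l where "0 < l" "l \<le> 2 * pi" and Q: "Q = carleson_box \<alpha> l"
      unfolding is_carleson_box_def by blast
    then interpret carleson_arc_positive \<alpha> l F
      using holo Re_F assms(2) by unfold_locales auto
    show "set_integrable lborel Q u \<and> set_integrable lborel Q (\<lambda>z. u z powr (- 1 / (p - 1))) \<and>
        avgA Q u * avgA Q (\<lambda>z. u z powr (- 1 / (p - 1))) powr (p - 1)
          \<le> 150 * (2 * 144 powr (1 / (p - 1)) / (1 - 1 / (p - 1))) powr (p - 1)"
      unfolding Q using carleson_box_bekolle_bonami_bound[OF _ \<open>p > 2\<close>] Re_F by (simp add: U_def)
  qed
qed

end
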